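(* Let $d\ge1$, let $F$ be a finite simple graph with vertex set $\{1,\dots,m\}$, let $(W_{(k)})_{k\in\Lambda_d}$ be a multivariate graphon, and let $\mathbf G_n=(G_n^{(k)})_{k\in\Lambda_d}$ be obtained from exchangeable $d$-layer multiplex networks on $[n]$ generated by $(W_{(k)})$, converging in the joint cut metric to $(W_{(1)},\dots,W_{(d)})$. Fix $k\in\Lambda_d$ and define \[ \sigma^2(k,\mathbf G_n)=\frac{1}{|\mathrm{Aut}(F)|^2}\Big[\sum_{1\le a,b\le m}\widehat t\Big(F\bigoplus_{a,b}F,G_n^{(k)}\Big)-m^2\,\widehat t(F,G_n^{(k)})^2\Big], \] where $\widehat t(F\bigoplus_{a,b}F,G_n^{(k)})=\frac1n\sum_{v=1}^n\tilde t_a(v,F,G_n^{(k)})\,\tilde t_b(v,F,G_n^{(k)})$ and $\widehat t(F,G_n^{(k)})=\frac{1}{|[n]_m|}\sum_{s\in[n]_m}\prod_{(a,b)\in E(F)}A^{(k)}_{s_as_b}$. Then: (1) if $W_{(k)}$ is $F$-regular, $\sqrt n\,\sigma^2(k,\mathbf G_n)\xrightarrow{P}0$; (2) if $W_{(k)}$ is $F$-irregular, $\sqrt n\,\sigma^2(k,\mathbf G_n)\xrightarrow{P}\infty$.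
   Context: $\Lambda_d$: nonempty subsets of $[d]$; $S(k)$ the layers of $k$. Exchangeable multiplex model: $\xi_1,\dots,\xi_n$ i.i.d. uniform; given $\xi$, the vectors $(A^{(1)}_{ij},\dots,A^{(d)}_{ij})$, $i<j$, are independent $d$-variate Bernoulli with $\mathbb P(A^{(l)}_{ij}=1\ \forall l\in S(k)\mid\xi)=W_{(k)}(\xi_i,\xi_j)$ (graphons: symmetric measurable $[0,1]^2\to[0,1]$); $G_n^{(k)}$ has adjacency matrix $A^{(k)}=\bigcirc_{l\in S(k)}A^{(l)}$. Joint cut metric convergence: $\inf_\varphi\sum_{j=1}^d\|W^{G_n^{(j)}}\circ(\varphi\times\varphi)-W_{(j)}\|_\square\to0$ over measure-preserving bijections $\varphi$ of $[0,1]$, with $\|U\|_\square=\sup_{A,B\subseteq[0,1]}|\int_{A\times B}U|$ and $W^G(x,y)=\mathbf 1\{(\lceil nx\rceil,\lceil ny\rceil)\in E(G)\}$. $[n]_m$: ordered $m$-tuples of distinct elements of $[n]$. $\tilde t_a(v,F,G)=n^{-(m-1)}\#\{$injective homomorphisms $\varphi:F\to G$ with $\varphi(a)=v\}$. $F\bigoplus_{a,b}F$ is the graph obtained from two copies of $F$ by identifying vertex $a$ of the first with vertex $b$ of the second. For a graphon $W$ and i.i.d. uniform $U_1,\dots,U_m$: $t(F,W)=\mathbb E\prod_{(b,c)\in E(F)}W(U_b,U_c)$, $t_a(x,F,W)=\mathbb E[\prod W(U_b,U_c)\mid U_a=x]$; $W$ is $F$-regular if $\frac1m\sum_at_a(x,F,W)=t(F,W)$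 for a.e. $x$, and $F$-irregular otherwise. *)

theory Defs
  imports "HOL-Probability.Probability" "HOL-Combinatorics.Permutations"
begin

definition U01 :: "real measure" where
  "U01 = restrict_space lborel {0..1}"

definition graphon :: "(real \<Rightarrow> real \<Rightarrow> real) \<Rightarrow> bool" where
  "graphon W \<longleftrightarrow> (\<lambda>p. W (fst p) (snd p)) \<in> borel_measurable (U01 \<Otimes>\<^sub>M U01) \<and>
     (\<forall>x\<in>{0..1}. \<forall>y\<in>{0..1}. W x y = W y x \<and> 0 \<le> W x y \<and> W x y \<le> 1)"

text \<open>Lambda_d: nonempty subsets of [d] = {1..d}; an element k is identified with S(k).\<close>
definition Lambda :: "nat \<Rightarrow> nat set set" where
  "Lambda d = {S. S \<noteq> {} \<and> S \<subseteq> {1..d}}"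

definition multigraphon :: "nat \<Rightarrow> (nat set \<Rightarrow> real \<Rightarrow> real \<Rightarrow> real) \<Rightarrow> bool" where
  "multigraphon d W \<longleftrightarrow> (\<forall>S\<in>Lambda d. graphon (W S))"

text \<open>W extended by W_{empty} = 1 (no constraint).\<close>
definition Wt :: "(nat set \<Rightarrow> real \<Rightarrow> real \<Rightarrow> real) \<Rightarrow> nat set \<Rightarrow> real \<Rightarrow> real \<Rightarrow> real" where
  "Wt W S x y = (if S = {} then 1 else W S x y)"

definition simple_graph :: "nat \<Rightarrow> (nat \<times> nat) set \<Rightarrow> bool" where
  "simple_graph m E \<longleftrightarrow> E \<subseteq> {(a,b). 1 \<le> a \<and> a < b \<and> b \<le> m}"

definition fadj :: "(nat \<times> nat) set \<Rightarrow> nat \<Rightarrow> nat \<Rightarrow> bool" where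
  "fadj E a b \<longleftrightarrow> (a,b) \<in> E \<or> (b,a) \<in> E"

definition aut :: "nat \<Rightarrow> (nat \<times> nat) set \<Rightarrow> (nat \<Rightarrow> nat) set" where
  "aut m E = {\<pi>. \<pi> permutes {1..m} \<and>
     (\<forall>a\<in>{1..m}. \<forall>b\<in>{1..m}. fadj E a b \<longleftrightarrow> fadj E (\<pi> a) (\<pi> b))}"

definition inj_maps :: "nat \<Rightarrow> nat \<Rightarrow> (nat \<Rightarrow> nat) set" where
  "inj_maps m n = {s \<in> {1..m} \<rightarrow>\<^sub>E {1..n}. inj_on s {1..m}}"

definition inj_homs :: "nat \<Rightarrow> (nat \<times> nat) set \<Rightarrow> nat \<Rightarrow> (nat \<Rightarrow> nat \<Rightarrow> bool) \<Rightarrow> (nat \<Rightarrow> nat) set" where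
  "inj_homs m E n G = {\<phi> \<in> inj_maps m n. \<forall>(a,b)\<in>E. G (\<phi> a) (\<phi> b)}"

definition t_tilde :: "nat \<Rightarrow> nat \<Rightarrow> nat \<Rightarrow> (nat \<times> nat) set \<Rightarrow> nat \<Rightarrow> (nat \<Rightarrow> nat \<Rightarrow> bool) \<Rightarrow> real" where
  "t_tilde a v m E n G = real (card {\<phi> \<in> inj_homs m E n G. \<phi> a = v}) / real n ^ (m - 1)"

definition t_hat :: "nat \<Rightarrow> (nat \<times> nat) set \<Rightarrow> nat \<Rightarrow> (nat \<Rightarrow> nat \<Rightarrow> bool) \<Rightarrow> real" where
  "t_hat m E n G = (\<Sum>s\<in>inj_maps m n. \<Prod>(a,b)\<in>E. if G (s a) (s b) then 1 else 0)
                     / real (card (inj_maps m n))"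

definition t_hat_join :: "nat \<Rightarrow> nat \<Rightarrow> nat \<Rightarrow> (nat \<times> nat) set \<Rightarrow> nat \<Rightarrow> (nat \<Rightarrow> nat \<Rightarrow> bool) \<Rightarrow> real" where
  "t_hat_join a b m E n G = (\<Sum>v=1..n. t_tilde a v m E n G * t_tilde b v m E n G) / real n"

definition sigma2 :: "nat \<Rightarrow> (nat \<times> nat) set \<Rightarrow> nat \<Rightarrow> (nat \<Rightarrow> nat \<Rightarrow> bool) \<Rightarrow> real" where
  "sigma2 m E n G = (1 / real (card (aut m E)) ^ 2) *
     ((\<Sum>a=1..m. \<Sum>b=1..m. t_hat_join a b m E n G) - real m ^ 2 * t_hat m E n G ^ 2)"

definition hom_density :: "nat \<Rightarrow> (nat \<times> nat) set \<Rightarrow> (real \<Rightarrow> real \<Rightarrow> real) \<Rightarrow> real" where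
  "hom_density m E W = (\<integral>x. (\<Prod>(b,c)\<in>E. W (x b) (x c)) \<partial>(PiM {1..m} (\<lambda>_. U01)))"

text \<open>t_a(x,F,W) = E[prod W(U_b,U_c) | U_a = x], computed by fixing coordinate a to x.\<close>
definition hom_density_root :: "nat \<Rightarrow> real \<Rightarrow> nat \<Rightarrow> (nat \<times> nat) set \<Rightarrow> (real \<Rightarrow> real \<Rightarrow> real) \<Rightarrow> real" where
  "hom_density_root a x m E W =
     (\<integral>u. (\<Prod>(b,c)\<in>E. W ((u(a := x)) b) ((u(a := x)) c)) \<partial>(PiM ({1..m} - {a}) (\<lambda>_. U01)))"

definition F_regular :: "nat \<Rightarrow> (nat \<times> nat) set \<Rightarrow> (real \<Rightarrow> real \<Rightarrow> real) \<Rightarrow> bool" where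
  "F_regular m E W \<longleftrightarrow>
     (AE x in U01. (\<Sum>a=1..m. hom_density_root a x m E W) / real m = hom_density m E W)"

definition cut_norm :: "(real \<Rightarrow> real \<Rightarrow> real) \<Rightarrow> real" where
  "cut_norm U = Sup ((\<lambda>(A,B). \<bar>\<integral>p. indicator (A \<times> B) p * U (fst p) (snd p) \<partial>(U01 \<Otimes>\<^sub>M U01)\<bar>)
                       ` {(A,B). A \<in> sets U01 \<and> B \<in> sets U01})"

definition mp_map :: "(real \<Rightarrow> real) \<Rightarrow> bool" where
  "mp_map \<phi> \<longleftrightarrow> \<phi> \<in> measurable U01 U01 \<and> distr U01 U01 \<phi> = U01"

definition mp_bij :: "(real \<Rightarrow> real) \<Rightarrow> bool" where
  "mp_bij \<phi> \<longleftrightarrow> bij_betw \<phi> {0..1} {0..1} \<and> mp_map \<phi> \<and> mp_map (the_inv_into {0..1} \<phi>)"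

definition step_graphon :: "nat \<Rightarrow> (nat \<Rightarrow> nat \<Rightarrow> bool) \<Rightarrow> real \<Rightarrow> real \<Rightarrow> real" where
  "step_graphon n G x y = (if G (nat \<lceil>real n * x\<rceil>) (nat \<lceil>real n * y\<rceil>) then 1 else 0)"

definition joint_cut_dist ::
  "nat \<Rightarrow> nat \<Rightarrow> (nat \<Rightarrow> nat \<Rightarrow> nat \<Rightarrow> bool) \<Rightarrow> (nat set \<Rightarrow> real \<Rightarrow> real \<Rightarrow> real) \<Rightarrow> real" where
  "joint_cut_dist n d Gs W = Inf ((\<lambda>\<phi>. \<Sum>j=1..d.
       cut_norm (\<lambda>x y. step_graphon n (Gs j) (\<phi> x) (\<phi> y) - W {j} x y)) ` {\<phi>. mp_bij \<phi>})"

definition madj :: "nat \<Rightarrow> (nat \<Rightarrow> nat \<Rightarrow> bool) \<Rightarrow> nat \<Rightarrow> nat \<Rightarrow> bool" where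
  "madj n X i j \<longleftrightarrow> (1 \<le> i \<and> i < j \<and> j \<le> n \<and> X i j) \<or> (1 \<le> j \<and> j < i \<and> i \<le> n \<and> X j i)"

text \<open>Adjacency of G_n^(k): Hadamard product of the layers l in k.\<close>
definition layer_adj :: "nat \<Rightarrow> (nat \<Rightarrow> nat \<Rightarrow> nat \<Rightarrow> nat \<Rightarrow> 'a \<Rightarrow> bool) \<Rightarrow> nat set \<Rightarrow> 'a \<Rightarrow> nat \<Rightarrow> nat \<Rightarrow> bool" where
  "layer_adj n A k \<omega> = madj n (\<lambda>i j. \<forall>l\<in>k. A n l i j \<omega>)"

text \<open>For each n, xi n i (i in [n]) are the latent variables and A n l i j (i<j in [n], l in [d])
  the layer-l edge indicators. The joint law: xi_1..xi_n i.i.d. uniform on [0,1], and given xi the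
  pair vectors are independent with P(A^(l)_ij = 1 for all l in S | xi) = W_S(xi_i,xi_j).
  This is expressed via the (intersection-stable, generating) family of events below.\<close>
definition multiplex_model ::
  "'a measure \<Rightarrow> nat \<Rightarrow> (nat set \<Rightarrow> real \<Rightarrow> real \<Rightarrow> real) \<Rightarrow> (nat \<Rightarrow> nat \<Rightarrow> 'a \<Rightarrow> real)
     \<Rightarrow> (nat \<Rightarrow> nat \<Rightarrow> nat \<Rightarrow> nat \<Rightarrow> 'a \<Rightarrow> bool) \<Rightarrow> bool" where
  "multiplex_model M d W \<xi> A \<longleftrightarrow> prob_space M \<and>
     (\<forall>n i. \<xi> n i \<in> borel_measurable M) \<and>
     (\<forall>n l i j. A n l i j \<in> measurable M (count_space UNIV)) \<and>
     (\<forall>n B S. (\<forall>i. B i \<in> sets borel) \<longrightarrow> (\<forall>i j. S i j \<subseteq> {1..d}) \<longrightarrow>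
        measure M {\<omega> \<in> space M. (\<forall>i\<in>{1..n}. \<xi> n i \<omega> \<in> B i) \<and>
                     (\<forall>i j. 1 \<le> i \<and> i < j \<and> j \<le> n \<longrightarrow> (\<forall>l\<in>S i j. A n l i j \<omega>))}
        = (\<integral>x. (\<Prod>i\<in>{1..n}. indicator (B i) (x i)) *
               (\<Prod>(i,j)\<in>{(i,j). 1 \<le> i \<and> i < j \<and> j \<le> n}. Wt W (S i j) (x i) (x j))
             \<partial>(PiM {1..n} (\<lambda>_. U01))))"

end

theory Submission
  imports Defs
begin

text \<open>
  Let X_n be the number of injective copies of F in G_n^(k) divided by n^m, and let Y_n be
  the sum over a, b of t(F +_(a,b) F, G_n^(k)). Then |Aut F|^2 sigma^2 = Y_n - m^2 X_n^2 + O(1/n),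
  and Y_n >= m^2 X_n^2 by Cauchy-Schwarz over the vertex at which the two copies are glued.
  A set of vertex pairs is present in G_n^(k) with probability the integral of the product of
  W_(k) over it, and sets on disjoint vertex sets are independent. Hence
  E X_n = t(F, W_(k)) + O(1/n) and E Y_n = sum_(a,b) integral t_a t_b + O(1/n), and both have
  variance O(1/n), since only a fraction O(1/n) of the pairs of summed events share a vertex.
  Now sum_(a,b) integral t_a t_b - (m t(F, W_(k)))^2 is the variance of sum_a t_a(U), which
  vanishes exactly when W_(k) is F-regular. In the regular case E (Y_n - m^2 X_n^2) = O(1/n),
  and Markov's inequality for this nonnegative variable gives sqrt n sigma^2 -> 0; otherwise
  Chebyshev's inequality keeps sigma^2 above a positive constant with probability 1 - O(1/n).
\<close>

section \<open>Uniform product measures\<close>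

lemma space_U01 [simp]: "space U01 = {0..1}"
  by (simp add: U01_def)

lemma prob_space_U01: "prob_space U01"
  by standard (simp add: U01_def emeasure_restrict_space)

interpretation U01: prob_space U01
  by (rule prob_space_U01)

interpretation U01_product: product_sigma_finite "\<lambda>_::nat. U01"
  by (simp add: product_sigma_finite_def prob_space_U01 prob_space_imp_sigma_finite)

abbreviation unif_cube :: "nat set \<Rightarrow> (nat \<Rightarrow> real) measure" where
  "unif_cube I \<equiv> PiM I (\<lambda>_. U01)"

interpretation unif_cube: prob_space "unif_cube I" for I
  by (simp add: prob_space_PiM prob_space_U01)

lemma (in prob_space) integral_in_unit_interval:
  fixes f :: "'a \<Rightarrow> real"
  assumes "\<And>x. x \<in> space M \<Longrightarrow> 0 \<le> f x \<and> f x \<le> 1"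
  shows "0 \<le> integral\<^sup>L M f \<and> integral\<^sup>L M f \<le> 1"
proof
  show "0 \<le> integral\<^sup>L M f"
    using assms by (intro integral_nonneg_AE) auto
  show "integral\<^sup>L M f \<le> 1"
  proof (cases "integrable M f")
    case True
    then have "integral\<^sup>L M f \<le> (\<integral>x. 1 \<partial>M)"
      using assms by (intro integral_mono) auto
    then show ?thesis
      by (simp add: prob_space)
  qed (simp add: not_integrable_integral_eq)
qed

lemma unif_cube_component_in_unit_interval:
  "x \<in> space (unif_cube I) \<Longrightarrow> i \<in> I \<Longrightarrow> x i \<in> {0..1}"
  by (auto simp: space_PiM)

lemma integral_unif_cube_fold:
  fixes h :: "(nat \<Rightarrow> real) \<Rightarrow> real"
  assumes "finite I" "V \<subseteq> I" "integrable (unif_cube I) h"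
  shows "integral\<^sup>L (unif_cube I) h
           = (\<integral>x. (\<integral>y. h (merge V (I - V) (x, y)) \<partial>unif_cube (I - V)) \<partial>unif_cube V)"
proof -
  have I: "V \<union> (I - V) = I"
    using assms(2) by auto
  have "finite V" "finite (I - V)"
    using assms(1,2) finite_subset by auto
  with assms(3) U01_product.product_integral_fold[of V "I - V" h] show ?thesis
    unfolding I by simp
qed

lemma integral_unif_cube_mult_disjoint:
  fixes f g :: "(nat \<Rightarrow> real) \<Rightarrow> real"
  assumes fin: "finite I" and sub: "V1 \<subseteq> I" "V2 \<subseteq> I" and disj: "V1 \<inter> V2 = {}"
    and f_meas: "f \<in> borel_measurable (unif_cube I)" and g_meas: "g \<in> borel_measurable (unif_cube I)"
    and f_bound: "\<And>x. x \<in> space (unif_cube I) \<Longrightarrow> \<bar>f x\<bar> \<le> B"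
    and g_bound: "\<And>x. x \<in> space (unif_cube I) \<Longrightarrow> \<bar>g x\<bar> \<le> B"
    and f_local: "\<And>x. f x = f (restrict x V1)" and g_local: "\<And>x. g x = g (restrict x V2)"
  shows "(\<integral>x. f x * g x \<partial>unif_cube I) = (\<integral>x. f x \<partial>unif_cube I) * (\<integral>x. g x \<partial>unif_cube I)"
proof -
  define J where "J = I - V1"
  have f_merge: "f (merge V1 J (x, y)) = f (restrict x V1)" for x y
  proof -
    have "restrict (merge V1 J (x, y)) V1 = restrict x V1"
      by (auto simp: merge_def restrict_def)
    then show ?thesis
      using f_local by metis
  qed
  have g_merge: "g (merge V1 J (x, y)) = g (restrict y V2)" for x y
  proof -
    have "restrict (merge V1 J (x, y)) V2 = restrict y V2"
      using disj sub by (auto simp: merge_def restrict_def J_def fun_eq_iff)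
    then show ?thesis
      using g_local by metis
  qed
  have "\<bar>f x * g x\<bar> \<le> B * B" if "x \<in> space (unif_cube I)" for x
    unfolding abs_mult using f_bound[OF that] g_bound[OF that] by (intro mult_mono) auto
  then have "integrable (unif_cube I) (\<lambda>x. f x * g x)"
    using f_meas g_meas by (intro unif_cube.integrable_const_bound[where B = "B * B"] AE_I2) auto
  moreover have "integrable (unif_cube I) f" "integrable (unif_cube I) g"
    using f_meas g_meas f_bound g_bound
    by (auto intro!: unif_cube.integrable_const_bound[where B = B] AE_I2)
  ultimately show ?thesis
    using integral_unif_cube_fold[OF fin sub(1), of "\<lambda>x. f x * g x"]
      integral_unif_cube_fold[OF fin sub(1), of f] integral_unif_cube_fold[OF fin sub(1), of g]
    by (simp add: f_merge g_merge unif_cube.prob_space flip: J_def)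
qed

lemma measurable_fun_upd_pair:
  assumes "v \<in> I"
  shows "(\<lambda>p. (snd p)(v := fst p)) \<in> measurable (U01 \<Otimes>\<^sub>M unif_cube (I - {v})) (unif_cube I)"
proof -
  have eq: "(\<lambda>p::real \<times> (nat \<Rightarrow> real). (snd p)(v := fst p)) = (\<lambda>p i. if i = v then fst p else snd p i)"
    by (auto simp: fun_eq_iff)
  show ?thesis
    unfolding eq
  proof (rule measurable_PiM_single')
    fix i assume "i \<in> I"
    then show "(\<lambda>p. if i = v then fst p else snd p i) \<in> measurable (U01 \<Otimes>\<^sub>M unif_cube (I - {v})) U01"
      by (cases "i = v") (auto intro: measurable_compose[OF measurable_snd measurable_component_singleton])
  qed (use assms in \<open>auto simp: space_pair_measure space_PiM PiE_def extensional_def\<close>)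
qed

lemma measurable_fun_upd:
  assumes "v \<in> I" "z \<in> {0..1}"
  shows "(\<lambda>y. y(v := z)) \<in> measurable (unif_cube (I - {v})) (unif_cube I)"
proof -
  have "(\<lambda>y. (z, y)) \<in> measurable (unif_cube (I - {v})) (U01 \<Otimes>\<^sub>M unif_cube (I - {v}))"
    using assms(2) by (intro measurable_Pair) auto
  from measurable_compose[OF this measurable_fun_upd_pair[OF assms(1)]] show ?thesis
    by simp
qed

lemma fun_upd_in_space_unif_cube:
  assumes "y \<in> space (unif_cube (I - {v}))" "z \<in> {0..1}" "v \<in> I"
  shows "y(v := z) \<in> space (unif_cube I)"
  using measurable_space[OF measurable_fun_upd[OF assms(3,2)] assms(1)] .

lemma borel_measurable_integral_fun_upd:
  fixes h :: "(nat \<Rightarrow> real) \<Rightarrow> real"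
  assumes "v \<in> I" "h \<in> borel_measurable (unif_cube I)"
  shows "(\<lambda>z. \<integral>y. h (y(v := z)) \<partial>unif_cube (I - {v})) \<in> borel_measurable U01"
proof -
  have "(\<lambda>p. h ((snd p)(v := fst p))) \<in> borel_measurable (U01 \<Otimes>\<^sub>M unif_cube (I - {v}))"
    using measurable_compose[OF measurable_fun_upd_pair[OF assms(1)] assms(2)] .
  then show ?thesis
    by (intro unif_cube.borel_measurable_lebesgue_integral) (simp add: case_prod_beta')
qed

lemma integral_unif_cube_split_coordinate:
  fixes h :: "(nat \<Rightarrow> real) \<Rightarrow> real"
  assumes fin: "finite I" and v: "v \<in> I" and h_meas: "h \<in> borel_measurable (unif_cube I)"
    and h_bound: "\<And>x. x \<in> space (unif_cube I) \<Longrightarrow> \<bar>h x\<bar> \<le> B"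
  shows "integral\<^sup>L (unif_cube I) h = (\<integral>z. (\<integral>y. h (y(v := z)) \<partial>unif_cube (I - {v})) \<partial>U01)"
proof -
  have "integrable (unif_cube I) h"
    using h_meas h_bound by (intro unif_cube.integrable_const_bound[where B = B] AE_I2) auto
  then have "integral\<^sup>L (unif_cube I) h
      = (\<integral>x. (\<integral>y. h (merge {v} (I - {v}) (x, y)) \<partial>unif_cube (I - {v})) \<partial>unif_cube {v})"
    using integral_unif_cube_fold[OF fin] v by simp
  also have "\<dots> = (\<integral>x. (\<integral>y. h (y(v := x v)) \<partial>unif_cube (I - {v})) \<partial>unif_cube {v})"
    by (intro Bochner_Integration.integral_cong refl)
       (auto simp: merge_def space_PiM PiE_def extensional_def intro!: arg_cong[where f = h])
  also have "\<dots> = (\<integral>z. (\<integral>y. h (y(v := z)) \<partial>unif_cube (I - {v})) \<partial>U01)"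
    by (rule U01_product.product_integral_singleton[OF borel_measurable_integral_fun_upd[OF v h_meas]])
  finally show ?thesis .
qed

lemma integral_unif_cube_reindex:
  fixes h :: "(nat \<Rightarrow> real) \<Rightarrow> real"
  assumes "inj_on r V" "r \<in> V \<rightarrow> I" "h \<in> borel_measurable (unif_cube V)"
  shows "(\<integral>x. h (\<lambda>j\<in>V. x (r j)) \<partial>unif_cube I) = integral\<^sup>L (unif_cube V) h"
proof -
  have "distr (unif_cube I) (unif_cube V) (\<lambda>x. \<lambda>j\<in>V. x (r j)) = unif_cube V"
    using distr_PiM_reindex[of I "\<lambda>_. U01" r V] assms(1,2) prob_space_U01 by simp
  moreover have "(\<lambda>x. \<lambda>j\<in>V. x (r j)) \<in> measurable (unif_cube I) (unif_cube V)"
    using assms(2) by (intro measurable_restrict) (auto intro: measurable_component_singleton)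
  ultimately show ?thesis
    using integral_distr[OF _ assms(3)] by metis
qed

section \<open>Homomorphism densities of a graphon\<close>

definition edge_prod :: "(real \<Rightarrow> real \<Rightarrow> real) \<Rightarrow> (nat \<times> nat) set \<Rightarrow> (nat \<Rightarrow> real) \<Rightarrow> real" where
  "edge_prod w P x = (\<Prod>(i,j)\<in>P. w (x i) (x j))"

lemma edge_prod_cong:
  assumes "\<And>i. i \<in> Field P \<Longrightarrow> x i = x' i"
  shows "edge_prod w P x = edge_prod w P x'"
proof -
  have "w (x i) (x j) = w (x' i) (x' j)" if "(i, j) \<in> P" for i j
    using assms[OF FieldI1[OF that]] assms[OF FieldI2[OF that]] by simp
  then show ?thesis
    unfolding edge_prod_def by (intro prod.cong) auto
qed

lemma edge_prod_restrict: "edge_prod w P x = edge_prod w P (restrict x (Field P))"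
  by (rule edge_prod_cong) simp

lemma edge_prod_Un:
  assumes "finite P" "finite Q" "P \<inter> Q = {}"
  shows "edge_prod w (P \<union> Q) x = edge_prod w P x * edge_prod w Q x"
  unfolding edge_prod_def using assms by (rule prod.union_disjoint)

lemma edge_prod_measurable:
  assumes "graphon w" "Field P \<subseteq> I"
  shows "edge_prod w P \<in> borel_measurable (unif_cube I)"
proof -
  have w: "(\<lambda>p. w (fst p) (snd p)) \<in> borel_measurable (U01 \<Otimes>\<^sub>M U01)"
    using assms(1) by (simp add: graphon_def)
  have "(\<lambda>x. w (x i) (x j)) \<in> borel_measurable (unif_cube I)" if "(i, j) \<in> P" for i j
  proof -
    have "i \<in> I" "j \<in> I"
      using that assms(2) by (auto simp: Field_def)
    then have "(\<lambda>x. (x i, x j)) \<in> measurable (unif_cube I) (U01 \<Otimes>\<^sub>M U01)"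
      by (intro measurable_Pair) (auto intro: measurable_component_singleton)
    from measurable_compose[OF this w] show ?thesis
      by simp
  qed
  then show ?thesis
    unfolding edge_prod_def by (intro borel_measurable_prod) auto
qed

lemma edge_prod_bounds:
  assumes "graphon w" "Field P \<subseteq> I" "x \<in> space (unif_cube I)"
  shows "0 \<le> edge_prod w P x \<and> edge_prod w P x \<le> 1"
proof -
  have "0 \<le> w (x i) (x j) \<and> w (x i) (x j) \<le> 1" if "(i, j) \<in> P" for i j
  proof -
    have "i \<in> I" "j \<in> I"
      using that assms(2) by (auto simp: Field_def)
    then show ?thesis
      using assms(1,3) unif_cube_component_in_unit_interval by (auto simp: graphon_def)
  qed
  then show ?thesis
    unfolding edge_prod_def by (auto intro!: prod_nonneg prod_le_1)
qed

lemma integral_edge_prod_bounds: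
  assumes "graphon w" "Field P \<subseteq> I"
  shows "0 \<le> integral\<^sup>L (unif_cube I) (edge_prod w P) \<and> integral\<^sup>L (unif_cube I) (edge_prod w P) \<le> 1"
  using edge_prod_bounds[OF assms] by (rule unif_cube.integral_in_unit_interval)

(* Vertex pairs of a graph on [n] are stored as (i, j) with i < j, hence the sorting. *)
definition edge_map :: "(nat \<Rightarrow> nat) \<Rightarrow> nat \<times> nat \<Rightarrow> nat \<times> nat" where
  "edge_map f = (\<lambda>(a,b). (min (f a) (f b), max (f a) (f b)))"

lemma inj_mapsD:
  assumes "f \<in> inj_maps m n"
  shows "inj_on f {1..m}" "\<And>a. a \<in> {1..m} \<Longrightarrow> f a \<in> {1..n}"
  using assms by (auto simp: inj_maps_def)

definition vertex_pairs :: "nat \<Rightarrow> (nat \<times> nat) set" where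
  "vertex_pairs n = {(i,j). 1 \<le> i \<and> i < j \<and> j \<le> n}"

lemma finite_vertex_pairs: "finite (vertex_pairs n)"
  by (rule finite_subset[of _ "{1..n} \<times> {1..n}"]) (auto simp: vertex_pairs_def)

lemma Field_vertex_pairs: "P \<subseteq> vertex_pairs n \<Longrightarrow> Field P \<subseteq> {1..n}"
  by (auto simp: vertex_pairs_def Field_def)

locale pattern_graphon =
  fixes w :: "real \<Rightarrow> real \<Rightarrow> real" and m :: nat and E :: "(nat \<times> nat) set"
  assumes graphon: "graphon w" and simple: "simple_graph m E"
begin

lemma edge_bounds: "(a,b) \<in> E \<Longrightarrow> a \<in> {1..m} \<and> b \<in> {1..m} \<and> a < b"
  using simple by (auto simp: simple_graph_def)

lemma Field_edges: "Field E \<subseteq> {1..m}"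
  using edge_bounds by (auto simp: Field_def)

lemma finite_edges: "finite E"
  using simple unfolding simple_graph_def
  by (rule finite_subset) (rule finite_subset[of _ "{1..m} \<times> {1..m}"], auto)

abbreviation t_root :: "nat \<Rightarrow> real \<Rightarrow> real" where
  "t_root a z \<equiv> hom_density_root a z m E w"

lemma hom_density_eq: "hom_density m E w = integral\<^sup>L (unif_cube {1..m}) (edge_prod w E)"
  unfolding hom_density_def edge_prod_def by simp

lemma hom_density_bounds: "0 \<le> hom_density m E w \<and> hom_density m E w \<le> 1"
  unfolding hom_density_eq by (rule integral_edge_prod_bounds[OF graphon Field_edges])

lemma t_root_eq: "t_root a z = (\<integral>u. edge_prod w E (u(a := z)) \<partial>unif_cube ({1..m} - {a}))"
  unfolding hom_density_root_def edge_prod_def by simp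

lemma edge_prod_edges_measurable: "edge_prod w E \<in> borel_measurable (unif_cube {1..m})"
  by (rule edge_prod_measurable[OF graphon Field_edges])

lemma edge_prod_edges_bounds:
  "x \<in> space (unif_cube {1..m}) \<Longrightarrow> 0 \<le> edge_prod w E x \<and> edge_prod w E x \<le> 1"
  by (rule edge_prod_bounds[OF graphon Field_edges])

lemma t_root_measurable: "a \<in> {1..m} \<Longrightarrow> t_root a \<in> borel_measurable U01"
  unfolding t_root_eq by (rule borel_measurable_integral_fun_upd[OF _ edge_prod_edges_measurable])

lemma t_root_bounds: "a \<in> {1..m} \<Longrightarrow> z \<in> {0..1} \<Longrightarrow> 0 \<le> t_root a z \<and> t_root a z \<le> 1"
  unfolding t_root_eq
  by (rule unif_cube.integral_in_unit_interval)
     (auto intro!: edge_prod_edges_bounds fun_upd_in_space_unif_cube)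

lemma integral_t_root: "a \<in> {1..m} \<Longrightarrow> (\<integral>z. t_root a z \<partial>U01) = hom_density m E w"
  unfolding t_root_eq hom_density_eq
  by (rule integral_unif_cube_split_coordinate[symmetric, OF _ _ edge_prod_edges_measurable, where B = 1])
     (use edge_prod_edges_bounds in auto)

abbreviation copy_edges :: "(nat \<Rightarrow> nat) \<Rightarrow> (nat \<times> nat) set" where
  "copy_edges f \<equiv> edge_map f ` E"

lemma inj_on_edge_map:
  assumes "inj_on f {1..m}"
  shows "inj_on (edge_map f) E"
proof (rule inj_onI)
  fix p q assume p: "p \<in> E" and q: "q \<in> E" and eq: "edge_map f p = edge_map f q"
  obtain a b c d where ab: "p = (a, b)" and cd: "q = (c, d)"
    by (cases p, cases q)
  have abm: "a \<in> {1..m}" "b \<in> {1..m}" "a < b" and cdm: "c \<in> {1..m}" "d \<in> {1..m}" "c < d"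
    using edge_bounds p q ab cd by auto
  have "f ` {a, b} = f ` {c, d}"
    using eq unfolding ab cd edge_map_def by (auto simp: min_def max_def split: if_splits)
  moreover have "inj_on f ({a, b} \<union> {c, d})"
    by (rule inj_on_subset[OF assms]) (use abm cdm in auto)
  ultimately have "{a, b} = {c, d}"
    by (metis inj_on_Un_image_eq_iff)
  then show "p = q"
    unfolding ab cd using abm cdm by (auto simp: doubleton_eq_iff)
qed

lemma Field_copy_edges: "Field (copy_edges f) \<subseteq> f ` {1..m}"
  using edge_bounds by (force simp: Field_def edge_map_def min_def max_def)

lemma Field_copy_edges_inj_maps: "f \<in> inj_maps m n \<Longrightarrow> Field (copy_edges f) \<subseteq> {1..n}"
  using Field_copy_edges inj_mapsD(2) by blast

lemma copy_edges_subset_vertex_pairs: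
  assumes f: "f \<in> inj_maps m n"
  shows "copy_edges f \<subseteq> vertex_pairs n"
proof
  fix p assume "p \<in> copy_edges f"
  then obtain a b where ab: "(a, b) \<in> E" "p = edge_map f (a, b)"
    by auto
  have "a \<in> {1..m}" "b \<in> {1..m}" "a \<noteq> b"
    using edge_bounds ab(1) by auto
  then have "f a \<noteq> f b" "f a \<in> {1..n}" "f b \<in> {1..n}"
    using inj_mapsD[OF f] by (auto dest: inj_onD)
  then show "p \<in> vertex_pairs n"
    unfolding ab(2) edge_map_def vertex_pairs_def by (auto simp: min_def max_def)
qed

lemma edge_prod_copy:
  assumes "inj_on f {1..m}" "\<And>a. a \<in> {1..m} \<Longrightarrow> x (f a) \<in> {0..1}"
  shows "edge_prod w (copy_edges f) x = edge_prod w E (\<lambda>j. x (f j))"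
proof -
  have "edge_prod w (copy_edges f) x = (\<Prod>e\<in>E. (\<lambda>(i,j). w (x i) (x j)) (edge_map f e))"
    unfolding edge_prod_def by (rule prod.reindex[OF inj_on_edge_map[OF assms(1)], unfolded comp_def])
  also have "\<dots> = edge_prod w E (\<lambda>j. x (f j))"
    unfolding edge_prod_def
  proof (rule prod.cong[OF refl])
    fix e assume e: "e \<in> E"
    obtain a b where ab: "e = (a, b)"
      by (cases e)
    have "x (f a) \<in> {0..1}" "x (f b) \<in> {0..1}"
      using assms(2) edge_bounds e ab by auto
    then have "w (x (f a)) (x (f b)) = w (x (f b)) (x (f a))"
      using graphon by (auto simp: graphon_def)
    then show "(\<lambda>(i,j). w (x i) (x j)) (edge_map f e) = (\<lambda>(i, j). w (x (f i)) (x (f j))) e"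
      unfolding ab edge_map_def by (auto simp: min_def max_def)
  qed
  finally show ?thesis .
qed

lemma edge_prod_copy_measurable:
  "f \<in> inj_maps m n \<Longrightarrow> edge_prod w (copy_edges f) \<in> borel_measurable (unif_cube {1..n})"
  by (rule edge_prod_measurable[OF graphon Field_copy_edges_inj_maps])

lemma edge_prod_copy_bounds:
  "f \<in> inj_maps m n \<Longrightarrow> x \<in> space (unif_cube {1..n})
    \<Longrightarrow> 0 \<le> edge_prod w (copy_edges f) x \<and> edge_prod w (copy_edges f) x \<le> 1"
  by (rule edge_prod_bounds[OF graphon Field_copy_edges_inj_maps])

lemma integral_copy:
  assumes f: "f \<in> inj_maps m n"
  shows "(\<integral>x. edge_prod w (copy_edges f) x \<partial>unif_cube {1..n}) = hom_density m E w"
proof -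
  have "(\<integral>x. edge_prod w (copy_edges f) x \<partial>unif_cube {1..n})
      = (\<integral>x. edge_prod w E (\<lambda>j\<in>{1..m}. x (f j)) \<partial>unif_cube {1..n})"
  proof (rule Bochner_Integration.integral_cong[OF refl])
    fix x assume x: "x \<in> space (unif_cube {1..n})"
    have "edge_prod w (copy_edges f) x = edge_prod w E (\<lambda>j. x (f j))"
      using inj_mapsD[OF f] unif_cube_component_in_unit_interval[OF x] by (intro edge_prod_copy) auto
    also have "\<dots> = edge_prod w E (\<lambda>j\<in>{1..m}. x (f j))"
      using Field_edges by (intro edge_prod_cong) auto
    finally show "edge_prod w (copy_edges f) x = edge_prod w E (\<lambda>j\<in>{1..m}. x (f j))" .
  qed
  also have "\<dots> = hom_density m E w"
    unfolding hom_density_eq using inj_mapsD[OF f]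
    by (intro integral_unif_cube_reindex edge_prod_edges_measurable) auto
  finally show ?thesis .
qed

lemma integral_rooted_copy:
  assumes f: "f \<in> inj_maps m n" and a: "a \<in> {1..m}" and z: "z \<in> {0..1}"
  shows "(\<integral>y. edge_prod w (copy_edges f) (y(f a := z)) \<partial>unif_cube ({1..n} - {f a})) = t_root a z"
proof -
  note f_inj = inj_mapsD[OF f]
  have fa: "f a \<in> {1..n}"
    using f_inj(2) a by blast
  have f_ne: "j \<in> {1..m} \<Longrightarrow> j \<noteq> a \<Longrightarrow> f j \<noteq> f a" for j
    using f_inj(1) a by (metis inj_on_contraD)
  have "(\<integral>y. edge_prod w (copy_edges f) (y(f a := z)) \<partial>unif_cube ({1..n} - {f a}))
      = (\<integral>y. edge_prod w E ((\<lambda>j\<in>{1..m} - {a}. y (f j))(a := z)) \<partial>unif_cube ({1..n} - {f a}))"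
  proof (rule Bochner_Integration.integral_cong[OF refl])
    fix y assume y: "y \<in> space (unif_cube ({1..n} - {f a}))"
    have "edge_prod w (copy_edges f) (y(f a := z)) = edge_prod w E (\<lambda>j. (y(f a := z)) (f j))"
      using f_inj unif_cube_component_in_unit_interval[OF fun_upd_in_space_unif_cube[OF y z fa]]
      by (intro edge_prod_copy) auto
    also have "\<dots> = edge_prod w E ((\<lambda>j\<in>{1..m} - {a}. y (f j))(a := z))"
      using Field_edges f_ne by (intro edge_prod_cong) auto
    finally show "edge_prod w (copy_edges f) (y(f a := z))
        = edge_prod w E ((\<lambda>j\<in>{1..m} - {a}. y (f j))(a := z))" .
  qed
  also have "\<dots> = t_root a z"
    unfolding t_root_eq
  proof (rule integral_unif_cube_reindex)
    show "inj_on f ({1..m} - {a})"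
      using f_inj(1) by (rule inj_on_subset) auto
    show "f \<in> {1..m} - {a} \<rightarrow> {1..n} - {f a}"
      using f_inj(2) f_ne by auto
    show "(\<lambda>u. edge_prod w E (u(a := z))) \<in> borel_measurable (unif_cube ({1..m} - {a}))"
      using measurable_compose[OF measurable_fun_upd[OF a z] edge_prod_edges_measurable] .
  qed
  finally show ?thesis .
qed

lemma edge_prod_copy_fun_upd_restrict:
  "edge_prod w (copy_edges f) (y(f a := z))
     = edge_prod w (copy_edges f) ((restrict y (f ` ({1..m} - {a})))(f a := z))"
  using Field_copy_edges by (intro edge_prod_cong) auto

text \<open>Two copies of \<open>F\<close> glued at one vertex and otherwise disjoint are conditionally
  independent given the latent variable of the common vertex.\<close>

lemma integral_glued_copies_fixed_root:
  assumes f: "f \<in> inj_maps m n" and g: "g \<in> inj_maps m n" and a: "a \<in> {1..m}" and b: "b \<in> {1..m}"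
    and glue: "f a = g b" and disj: "f ` ({1..m} - {a}) \<inter> g ` ({1..m} - {b}) = {}"
    and z: "z \<in> {0..1}"
  shows "(\<integral>y. edge_prod w (copy_edges f) (y(f a := z)) * edge_prod w (copy_edges g) (y(f a := z))
            \<partial>unif_cube ({1..n} - {f a})) = t_root a z * t_root b z"
proof -
  define v where "v = f a"
  have v: "v \<in> {1..n}"
    using inj_mapsD(2)[OF f a] v_def by blast
  define F where "F y = edge_prod w (copy_edges f) (y(v := z))" for y
  define G where "G y = edge_prod w (copy_edges g) (y(v := z))" for y
  have F_meas: "F \<in> borel_measurable (unif_cube ({1..n} - {v}))"
    unfolding F_def using measurable_compose[OF measurable_fun_upd[OF v z] edge_prod_copy_measurable[OF f]] .
  have G_meas: "G \<in> borel_measurable (unif_cube ({1..n} - {v}))"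
    unfolding G_def using measurable_compose[OF measurable_fun_upd[OF v z] edge_prod_copy_measurable[OF g]] .
  have "\<bar>F y\<bar> \<le> 1" "\<bar>G y\<bar> \<le> 1" if "y \<in> space (unif_cube ({1..n} - {v}))" for y
    unfolding F_def G_def
    using edge_prod_copy_bounds[OF f] edge_prod_copy_bounds[OF g] fun_upd_in_space_unif_cube[OF that z v]
    by fastforce+
  moreover have "F y = F (restrict y (f ` ({1..m} - {a})))" for y
    unfolding F_def v_def by (rule edge_prod_copy_fun_upd_restrict)
  moreover have "G y = G (restrict y (g ` ({1..m} - {b})))" for y
    unfolding G_def v_def glue by (rule edge_prod_copy_fun_upd_restrict)
  moreover have "f ` ({1..m} - {a}) \<subseteq> {1..n} - {v}"
    using inj_mapsD[OF f] a unfolding v_def by (auto dest: inj_onD)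
  moreover have "g ` ({1..m} - {b}) \<subseteq> {1..n} - {v}"
    using inj_mapsD[OF g] b unfolding v_def glue by (auto dest: inj_onD)
  ultimately have "(\<integral>y. F y * G y \<partial>unif_cube ({1..n} - {v}))
      = (\<integral>y. F y \<partial>unif_cube ({1..n} - {v})) * (\<integral>y. G y \<partial>unif_cube ({1..n} - {v}))"
    by (intro integral_unif_cube_mult_disjoint[OF _ _ _ disj F_meas G_meas]) auto
  then show ?thesis
    using integral_rooted_copy[OF f a z] integral_rooted_copy[OF g b z]
    unfolding F_def G_def v_def glue by simp
qed

lemma integral_glued_copies:
  assumes f: "f \<in> inj_maps m n" and g: "g \<in> inj_maps m n" and a: "a \<in> {1..m}" and b: "b \<in> {1..m}"
    and glue: "f a = g b" and disj: "f ` ({1..m} - {a}) \<inter> g ` ({1..m} - {b}) = {}"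
  shows "(\<integral>x. edge_prod w (copy_edges f) x * edge_prod w (copy_edges g) x \<partial>unif_cube {1..n})
           = (\<integral>z. t_root a z * t_root b z \<partial>U01)"
proof -
  have "\<bar>edge_prod w (copy_edges f) x * edge_prod w (copy_edges g) x\<bar> \<le> 1"
    if "x \<in> space (unif_cube {1..n})" for x
    using edge_prod_copy_bounds[OF f that] edge_prod_copy_bounds[OF g that] by (simp add: abs_mult mult_le_one)
  with inj_mapsD(2)[OF f a] edge_prod_copy_measurable[OF f] edge_prod_copy_measurable[OF g]
  have "(\<integral>x. edge_prod w (copy_edges f) x * edge_prod w (copy_edges g) x \<partial>unif_cube {1..n})
      = (\<integral>z. (\<integral>y. edge_prod w (copy_edges f) (y(f a := z)) * edge_prod w (copy_edges g) (y(f a := z))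
            \<partial>unif_cube ({1..n} - {f a})) \<partial>U01)"
    by (intro integral_unif_cube_split_coordinate[where B = 1]) auto
  also have "\<dots> = (\<integral>z. t_root a z * t_root b z \<partial>U01)"
    by (intro Bochner_Integration.integral_cong refl integral_glued_copies_fixed_root[OF f g a b glue disj]) simp
  finally show ?thesis .
qed

end

section \<open>Counting maps\<close>

abbreviation all_maps :: "nat \<Rightarrow> nat \<Rightarrow> (nat \<Rightarrow> nat) set" where
  "all_maps m n \<equiv> {1..m} \<rightarrow>\<^sub>E {1..n}"

lemma card_all_maps: "card (all_maps m n) = n ^ m"
  by (simp add: card_PiE)

lemma finite_all_maps: "finite (all_maps m n)"
  by (simp add: finite_PiE)

lemma finite_PiE_filter [simp]: "finite A \<Longrightarrow> finite B \<Longrightarrow> finite {\<phi> \<in> A \<rightarrow>\<^sub>E B. P \<phi>}"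
  by (rule finite_subset[OF _ finite_PiE]) auto

lemma finite_PiE_finite [simp]: "finite A \<Longrightarrow> finite B \<Longrightarrow> finite (A \<rightarrow>\<^sub>E B)"
  by (simp add: finite_PiE)

lemma card_PiE_fixed:
  assumes "finite I" "D \<subseteq> I" "\<And>i. i \<in> D \<Longrightarrow> f i \<in> S"
  shows "card {\<phi> \<in> I \<rightarrow>\<^sub>E S. \<forall>i\<in>D. \<phi> i = f i} = card S ^ card (I - D)"
proof -
  have "{\<phi> \<in> I \<rightarrow>\<^sub>E S. \<forall>i\<in>D. \<phi> i = f i} = PiE I (\<lambda>i. if i \<in> D then {f i} else S)"
    using assms(2,3) by (auto simp: PiE_def Pi_def split: if_splits)
  then have "card {\<phi> \<in> I \<rightarrow>\<^sub>E S. \<forall>i\<in>D. \<phi> i = f i} = (\<Prod>i\<in>I. if i \<in> D then 1 else card S)"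
    using assms(1) by (simp add: card_PiE if_distrib cong: if_cong)
  also have "\<dots> = card S ^ card (I - D)"
    using assms(1,2) by (simp add: prod.If_cases Int_absorb1 Diff_eq)
  finally show ?thesis .
qed

lemma card_maps_fixed_value:
  assumes "a \<in> {1..m}" "x \<in> {1..n}"
  shows "card {\<phi> \<in> all_maps m n. \<phi> a = x} = n ^ (m - 1)"
  using card_PiE_fixed[of "{1..m}" "{a}" "\<lambda>_. x" "{1..n}"] assms by simp

lemma card_maps_fixed_value_le:
  assumes "a \<in> {1..m}"
  shows "card {\<phi> \<in> all_maps m n. \<phi> a = x} \<le> n ^ (m - 1)"
proof (cases "x \<in> {1..n}")
  case False
  then have "{\<phi> \<in> all_maps m n. \<phi> a = x} = {}"
    using assms by (auto simp: PiE_def Pi_def)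
  then show ?thesis
    by (metis card.empty zero_le)
qed (use card_maps_fixed_value[OF assms] in simp)

lemma card_maps_two_fixed_values_le:
  assumes "a \<in> {1..m}" "b \<in> {1..m}" "a \<noteq> b"
  shows "card {\<phi> \<in> all_maps m n. \<phi> a = x \<and> \<phi> b = y} \<le> n ^ (m - 2)"
proof (cases "x \<in> {1..n} \<and> y \<in> {1..n}")
  case True
  have "card {\<phi> \<in> all_maps m n. \<forall>i\<in>{a,b}. \<phi> i = (if i = a then x else y)}
      = card {1..n} ^ card ({1..m} - {a,b})"
    by (rule card_PiE_fixed) (use assms True in auto)
  moreover have "{\<phi> \<in> all_maps m n. \<forall>i\<in>{a,b}. \<phi> i = (if i = a then x else y)}
      = {\<phi> \<in> all_maps m n. \<phi> a = x \<and> \<phi> b = y}"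
    using assms by auto
  moreover have "card ({1..m} - {a,b}) = m - 2"
    using assms by (simp add: card_Diff_subset)
  ultimately show ?thesis
    by simp
next
  case False
  then have "{\<phi> \<in> all_maps m n. \<phi> a = x \<and> \<phi> b = y} = {}"
    using assms by (auto simp: PiE_def Pi_def)
  then show ?thesis
    by (metis card.empty zero_le)
qed

lemma card_maps_collision_le:
  assumes "a \<in> {1..m}" "b \<in> {1..m}" "a \<noteq> b"
  shows "card {\<phi> \<in> all_maps m n. \<phi> a = \<phi> b} \<le> n ^ (m - 1)"
proof -
  have "{\<phi> \<in> all_maps m n. \<phi> a = \<phi> b} = (\<Union>x\<in>{1..n}. {\<phi> \<in> all_maps m n. \<phi> a = x \<and> \<phi> b = x})"
    using assms by (auto simp: PiE_def Pi_def)
  then have "card {\<phi> \<in> all_maps m n. \<phi> a = \<phi> b} \<le> (\<Sum>x\<in>{1..n}. card {\<phi> \<in> all_maps m n. \<phi> a = x \<and> \<phi> b = x})"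
    by (simp add: card_UN_le)
  also have "\<dots> \<le> (\<Sum>x\<in>{1..n}. n ^ (m - 2))"
    by (intro sum_mono card_maps_two_fixed_values_le[OF assms])
  also have "\<dots> = n ^ (m - 1)"
  proof -
    have "m - 1 = Suc (m - 2)"
      using assms by auto
    then show ?thesis
      by simp
  qed
  finally show ?thesis .
qed

lemma card_maps_hitting_le: "card {\<phi> \<in> all_maps m n. u \<in> \<phi> ` {1..m}} \<le> m * n ^ (m - 1)"
proof -
  have "{\<phi> \<in> all_maps m n. u \<in> \<phi> ` {1..m}} = (\<Union>a\<in>{1..m}. {\<phi> \<in> all_maps m n. \<phi> a = u})"
    by auto
  then have "card {\<phi> \<in> all_maps m n. u \<in> \<phi> ` {1..m}} \<le> (\<Sum>a\<in>{1..m}. card {\<phi> \<in> all_maps m n. \<phi> a = u})"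
    by (simp add: card_UN_le)
  also have "\<dots> \<le> (\<Sum>a\<in>{1..m}. n ^ (m - 1))"
    by (intro sum_mono card_maps_fixed_value_le) auto
  finally show ?thesis
    by simp
qed

lemma inj_maps_subset: "inj_maps m n \<subseteq> all_maps m n"
  by (auto simp: inj_maps_def)

lemma finite_inj_maps: "finite (inj_maps m n)"
  using finite_subset[OF inj_maps_subset finite_all_maps] .

lemma card_non_inj_maps_le: "card (all_maps m n - inj_maps m n) \<le> m * m * n ^ (m - 1)"
proof -
  have "all_maps m n - inj_maps m n \<subseteq> (\<Union>a\<in>{1..m}. \<Union>b\<in>{1..m} - {a}. {\<phi> \<in> all_maps m n. \<phi> a = \<phi> b})"
    by (auto simp: inj_maps_def inj_on_def)
  then have "card (all_maps m n - inj_maps m n)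
      \<le> card (\<Union>a\<in>{1..m}. \<Union>b\<in>{1..m} - {a}. {\<phi> \<in> all_maps m n. \<phi> a = \<phi> b})"
    by (rule card_mono[rotated]) auto
  also have "\<dots> \<le> (\<Sum>a\<in>{1..m}. card (\<Union>b\<in>{1..m} - {a}. {\<phi> \<in> all_maps m n. \<phi> a = \<phi> b}))"
    by (rule card_UN_le) simp
  also have "\<dots> \<le> (\<Sum>a\<in>{1..m}. \<Sum>b\<in>{1..m} - {a}. card {\<phi> \<in> all_maps m n. \<phi> a = \<phi> b})"
    by (intro sum_mono card_UN_le) simp
  also have "\<dots> \<le> (\<Sum>a\<in>{1..m}. \<Sum>b\<in>{1..m} - {a}. n ^ (m - 1))"
    by (intro sum_mono card_maps_collision_le) auto
  also have "\<dots> \<le> (\<Sum>a\<in>{1..m}. \<Sum>b\<in>{1..m}. n ^ (m - 1))"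
    by (intro sum_mono sum_mono2) auto
  finally show ?thesis
    by simp
qed

lemma card_inj_maps_le: "card (inj_maps m n) \<le> n ^ m"
  using card_mono[OF finite_all_maps inj_maps_subset] card_all_maps by simp

lemma card_inj_maps_ge: "real n ^ m - real (m * m) * real n ^ (m - 1) \<le> real (card (inj_maps m n))"
proof -
  have "card (all_maps m n) = card (inj_maps m n) + card (all_maps m n - inj_maps m n)"
    using card_Diff_subset[OF finite_inj_maps inj_maps_subset] card_mono[OF finite_all_maps inj_maps_subset]
    by simp
  then have "n ^ m \<le> card (inj_maps m n) + m * m * n ^ (m - 1)"
    using card_non_inj_maps_le card_all_maps by (metis add_left_mono)
  then show ?thesis
    by (simp flip: of_nat_power of_nat_mult of_nat_add)
qed

lemma card_map_pairs_le:
  assumes "S \<subseteq> all_maps m n" "b \<in> {1..m}"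
  shows "card {(\<phi>, \<psi>). \<phi> \<in> S \<and> \<psi> \<in> all_maps m n \<and> \<psi> b = g \<phi>} \<le> card S * n ^ (m - 1)"
proof -
  have "finite S"
    using finite_subset[OF assms(1) finite_all_maps] .
  moreover have "{(\<phi>, \<psi>). \<phi> \<in> S \<and> \<psi> \<in> all_maps m n \<and> \<psi> b = g \<phi>}
      = Sigma S (\<lambda>\<phi>. {\<psi> \<in> all_maps m n. \<psi> b = g \<phi>})"
    by auto
  ultimately have "card {(\<phi>, \<psi>). \<phi> \<in> S \<and> \<psi> \<in> all_maps m n \<and> \<psi> b = g \<phi>}
      = (\<Sum>\<phi>\<in>S. card {\<psi> \<in> all_maps m n. \<psi> b = g \<phi>})"
    by (simp add: card_SigmaI)
  also have "\<dots> \<le> (\<Sum>\<phi>\<in>S. n ^ (m - 1))"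
    by (intro sum_mono card_maps_fixed_value_le[OF assms(2)])
  finally show ?thesis
    by simp
qed

lemma card_map_pairs:
  assumes "b \<in> {1..m}" "\<And>\<phi>. \<phi> \<in> S \<Longrightarrow> g \<phi> \<in> {1..n}" "finite S"
  shows "card {(\<phi>, \<psi>). \<phi> \<in> S \<and> \<psi> \<in> all_maps m n \<and> \<psi> b = g \<phi>} = card S * n ^ (m - 1)"
proof -
  have "{(\<phi>, \<psi>). \<phi> \<in> S \<and> \<psi> \<in> all_maps m n \<and> \<psi> b = g \<phi>}
      = Sigma S (\<lambda>\<phi>. {\<psi> \<in> all_maps m n. \<psi> b = g \<phi>})"
    by auto
  then have "card {(\<phi>, \<psi>). \<phi> \<in> S \<and> \<psi> \<in> all_maps m n \<and> \<psi> b = g \<phi>}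
      = (\<Sum>\<phi>\<in>S. card {\<psi> \<in> all_maps m n. \<psi> b = g \<phi>})"
    using assms(3) by (simp add: card_SigmaI)
  also have "\<dots> = (\<Sum>\<phi>\<in>S. n ^ (m - 1))"
    by (intro sum.cong refl card_maps_fixed_value assms(1,2))
  finally show ?thesis
    by simp
qed

lemma card_map_pairs_two_values_le:
  assumes "S \<subseteq> all_maps m n" "b \<in> {1..m}" "e \<in> {1..m}" "b \<noteq> e"
  shows "card {(\<phi>, \<psi>). \<phi> \<in> S \<and> \<psi> \<in> all_maps m n \<and> \<psi> b = g \<phi> \<and> \<psi> e = h \<phi>}
           \<le> card S * n ^ (m - 2)"
proof -
  have "finite S"
    using finite_subset[OF assms(1) finite_all_maps] .
  moreover have "{(\<phi>, \<psi>). \<phi> \<in> S \<and> \<psi> \<in> all_maps m n \<and> \<psi> b = g \<phi> \<and> \<psi> e = h \<phi>}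
      = Sigma S (\<lambda>\<phi>. {\<psi> \<in> all_maps m n. \<psi> b = g \<phi> \<and> \<psi> e = h \<phi>})"
    by auto
  ultimately have "card {(\<phi>, \<psi>). \<phi> \<in> S \<and> \<psi> \<in> all_maps m n \<and> \<psi> b = g \<phi> \<and> \<psi> e = h \<phi>}
      = (\<Sum>\<phi>\<in>S. card {\<psi> \<in> all_maps m n. \<psi> b = g \<phi> \<and> \<psi> e = h \<phi>})"
    by (simp add: card_SigmaI)
  also have "\<dots> \<le> (\<Sum>\<phi>\<in>S. n ^ (m - 2))"
    by (intro sum_mono card_maps_two_fixed_values_le[OF assms(2-4)])
  finally show ?thesis
    by simp
qed

lemma card_doubly_glued_maps_le:
  assumes "b \<in> {1..m}" "e \<in> {1..m}" "b \<noteq> e"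
  shows "card {(f, g). f \<in> all_maps m n \<and> g \<in> all_maps m n \<and> g b = f a \<and> g e = f c}
           \<le> n ^ (m - 1) * n ^ (m - 1)"
proof -
  have "card {(f, g). f \<in> all_maps m n \<and> g \<in> all_maps m n \<and> g b = f a \<and> g e = f c}
      \<le> card (all_maps m n) * n ^ (m - 2)"
    by (rule card_map_pairs_two_values_le[OF subset_refl assms])
  also have "\<dots> = n ^ (m - 1) * n ^ (m - 1)"
  proof -
    have "2 \<le> m"
      using assms by auto
    then obtain j where "m = Suc (Suc j)"
      by (metis add_2_eq_Suc le_Suc_ex)
    then show ?thesis
      by (simp add: card_PiE flip: power_add)
  qed
  finally show ?thesis .
qed

lemma card_swap_pairs: "card {(\<psi>, \<phi>). P \<phi> \<psi>} = card {(\<phi>, \<psi>). P \<phi> \<psi>}"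
proof -
  have "{(\<psi>, \<phi>). P \<phi> \<psi>} = prod.swap ` {(\<phi>, \<psi>). P \<phi> \<psi>}"
    by auto
  then show ?thesis
    by (simp add: card_image)
qed

lemma card_glued_maps_le:
  assumes "S \<subseteq> all_maps m n" "a \<in> {1..m}" "b \<in> {1..m}"
  shows "card ({(f, g). f \<in> S \<and> g \<in> all_maps m n \<and> g b = f a} \<union> {(f, g). g \<in> S \<and> f \<in> all_maps m n \<and> f a = g b})
           \<le> 2 * (card S * n ^ (m - 1))"
proof -
  define X where "X = {(f, g). f \<in> S \<and> g \<in> all_maps m n \<and> g b = f a}"
  define Y where "Y = {(f, g). g \<in> S \<and> f \<in> all_maps m n \<and> f a = g b}"
  have "card Y = card {(g, f). g \<in> S \<and> f \<in> all_maps m n \<and> f a = g b}"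
    unfolding Y_def by (rule card_swap_pairs[where P = "\<lambda>g f. g \<in> S \<and> f \<in> all_maps m n \<and> f a = g b"])
  also have "\<dots> \<le> card S * n ^ (m - 1)"
    by (rule card_map_pairs_le[OF assms(1,2)])
  finally have "card Y \<le> card S * n ^ (m - 1)" .
  moreover have "card X \<le> card S * n ^ (m - 1)"
    unfolding X_def by (rule card_map_pairs_le[OF assms(1,3)])
  moreover have "card (X \<union> Y) \<le> card X + card Y"
    by (rule card_Un_le)
  ultimately show ?thesis
    unfolding X_def Y_def by linarith
qed

lemma card_intersecting_pairs_le:
  assumes "finite J" "finite U" "\<And>a. a \<in> J \<Longrightarrow> V a \<subseteq> U"
    and "\<And>u. u \<in> U \<Longrightarrow> card {a \<in> J. u \<in> V a} \<le> c"
  shows "card {p \<in> J \<times> J. V (fst p) \<inter> V (snd p) \<noteq> {}} \<le> card U * (c * c)"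
proof -
  have "{p \<in> J \<times> J. V (fst p) \<inter> V (snd p) \<noteq> {}} \<subseteq> (\<Union>u\<in>U. {a \<in> J. u \<in> V a} \<times> {a \<in> J. u \<in> V a})"
    using assms(3) by fastforce
  then have "card {p \<in> J \<times> J. V (fst p) \<inter> V (snd p) \<noteq> {}}
      \<le> card (\<Union>u\<in>U. {a \<in> J. u \<in> V a} \<times> {a \<in> J. u \<in> V a})"
    by (rule card_mono[rotated]) (use assms(1,2) in simp)
  also have "\<dots> \<le> (\<Sum>u\<in>U. card ({a \<in> J. u \<in> V a} \<times> {a \<in> J. u \<in> V a}))"
    by (rule card_UN_le[OF assms(2)])
  also have "\<dots> \<le> (\<Sum>u\<in>U. c * c)"
    using assms(4) by (intro sum_mono) (simp add: card_cartesian_product mult_mono)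
  finally show ?thesis
    by simp
qed

section \<open>Edge events of the multiplex model\<close>

lemma finite_subset_vertex_pairs: "P \<subseteq> vertex_pairs n \<Longrightarrow> finite P"
  using finite_subset[OF _ finite_vertex_pairs] .

locale multiplex =
  fixes M :: "'a measure" and d :: nat and W :: "nat set \<Rightarrow> real \<Rightarrow> real \<Rightarrow> real"
    and \<xi> :: "nat \<Rightarrow> nat \<Rightarrow> 'a \<Rightarrow> real" and A :: "nat \<Rightarrow> nat \<Rightarrow> nat \<Rightarrow> nat \<Rightarrow> 'a \<Rightarrow> bool"
    and k :: "nat set"
  assumes model: "multiplex_model M d W \<xi> A" and layers: "k \<in> Lambda d"
    and multigraphon: "multigraphon d W"
begin

sublocale prob_space M
  using model by (simp add: multiplex_model_def)

lemma graphon_W: "graphon (W k)"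
  using multigraphon layers by (simp add: multigraphon_def)

lemma layers_nonempty: "k \<noteq> {}" and layers_subset: "k \<subseteq> {1..d}"
  using layers by (auto simp: Lambda_def)

lemma A_measurable [measurable]: "A n l i j \<in> measurable M (count_space UNIV)"
  using model by (simp add: multiplex_model_def)

definition edge_event :: "nat \<Rightarrow> (nat \<times> nat) set \<Rightarrow> 'a set" where
  "edge_event n P = {\<omega> \<in> space M. \<forall>p\<in>P. \<forall>l\<in>k. A n l (fst p) (snd p) \<omega>}"

definition edge_prob :: "nat \<Rightarrow> (nat \<times> nat) set \<Rightarrow> real" where
  "edge_prob n P = (\<integral>x. edge_prod (W k) P x \<partial>unif_cube {1..n})"

lemma edge_event_sets [measurable]: "finite P \<Longrightarrow> edge_event n P \<in> sets M"
  unfolding edge_event_def using finite_subset[OF layers_subset] by measurable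

lemma edge_event_Un: "edge_event n (P \<union> Q) = edge_event n P \<inter> edge_event n Q"
  unfolding edge_event_def by auto

lemma edge_prob_bounds: "P \<subseteq> vertex_pairs n \<Longrightarrow> 0 \<le> edge_prob n P \<and> edge_prob n P \<le> 1"
  unfolding edge_prob_def by (rule integral_edge_prod_bounds[OF graphon_W Field_vertex_pairs])

lemma measure_edge_event:
  assumes P: "P \<subseteq> vertex_pairs n"
  shows "measure M (edge_event n P) = edge_prob n P"
proof -
  define S where "S i j = (if (i, j) \<in> P then k else {})" for i j
  have "edge_event n P = {\<omega> \<in> space M. (\<forall>i\<in>{1..n}. \<xi> n i \<omega> \<in> UNIV) \<and>
      (\<forall>i j. 1 \<le> i \<and> i < j \<and> j \<le> n \<longrightarrow> (\<forall>l\<in>S i j. A n l i j \<omega>))}"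
    using P unfolding edge_event_def S_def vertex_pairs_def by auto
  moreover have "(\<Prod>i\<in>{1..n}. indicator UNIV (x i)) *
      (\<Prod>(i,j)\<in>{(i,j). 1 \<le> i \<and> i < j \<and> j \<le> n}. Wt W (S i j) (x i) (x j)) = edge_prod (W k) P x"
    for x :: "nat \<Rightarrow> real"
  proof -
    have "(\<Prod>(i,j)\<in>vertex_pairs n. Wt W (S i j) (x i) (x j))
        = (\<Prod>p\<in>vertex_pairs n. if p \<in> P then (\<lambda>(i,j). W k (x i) (x j)) p else 1)"
      unfolding S_def Wt_def using layers_nonempty by (intro prod.cong) auto
    also have "\<dots> = edge_prod (W k) P x"
      unfolding prod.inter_restrict[OF finite_vertex_pairs, symmetric] edge_prod_def
      using P by (simp add: Int_absorb1)
    finally show ?thesis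
      by (simp add: vertex_pairs_def)
  qed
  moreover have law: "measure M {\<omega> \<in> space M. (\<forall>i\<in>{1..n}. \<xi> n i \<omega> \<in> B i) \<and>
      (\<forall>i j. 1 \<le> i \<and> i < j \<and> j \<le> n \<longrightarrow> (\<forall>l\<in>S i j. A n l i j \<omega>))}
    = (\<integral>x. (\<Prod>i\<in>{1..n}. indicator (B i) (x i)) *
        (\<Prod>(i,j)\<in>{(i,j). 1 \<le> i \<and> i < j \<and> j \<le> n}. Wt W (S i j) (x i) (x j)) \<partial>unif_cube {1..n})"
    if "\<forall>i. B i \<in> sets borel" for B
    using model that layers_subset unfolding multiplex_model_def S_def by simp
  ultimately show ?thesis
    using law[of "\<lambda>_. UNIV"] unfolding edge_prob_def by simp
qed

lemma integrable_indicator_edge_event: "finite P \<Longrightarrow> integrable M (indicator (edge_event n P) :: 'a \<Rightarrow> real)"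
  by (intro integrable_real_indicator edge_event_sets) (simp_all add: less_top[symmetric])

lemma integral_indicator_edge_event:
  "P \<subseteq> vertex_pairs n \<Longrightarrow> (\<integral>\<omega>. indicator (edge_event n P) \<omega> \<partial>M) = edge_prob n P"
  using measure_edge_event finite_subset_vertex_pairs by simp

lemma edge_prob_Un_disjoint:
  assumes P: "P \<subseteq> vertex_pairs n" and Q: "Q \<subseteq> vertex_pairs n" and disj: "Field P \<inter> Field Q = {}"
  shows "edge_prob n (P \<union> Q) = edge_prob n P * edge_prob n Q"
proof -
  have "P \<inter> Q = {}"
    using disj by (force simp: Field_def)
  from edge_prod_Un[OF finite_subset_vertex_pairs[OF P] finite_subset_vertex_pairs[OF Q] this]
  have "edge_prod (W k) (P \<union> Q) x = edge_prod (W k) P x * edge_prod (W k) Q x" for x .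
  then have "edge_prob n (P \<union> Q) = (\<integral>x. edge_prod (W k) P x * edge_prod (W k) Q x \<partial>unif_cube {1..n})"
    by (simp add: edge_prob_def)
  also have "\<dots> = edge_prob n P * edge_prob n Q"
    unfolding edge_prob_def
  proof (rule integral_unif_cube_mult_disjoint[OF _ Field_vertex_pairs[OF P] Field_vertex_pairs[OF Q] disj,
        where B = 1])
    show "edge_prod (W k) P \<in> borel_measurable (unif_cube {1..n})" "edge_prod (W k) Q \<in> borel_measurable (unif_cube {1..n})"
      using Field_vertex_pairs[OF P] Field_vertex_pairs[OF Q] by (auto intro: edge_prod_measurable[OF graphon_W])
    show "\<bar>edge_prod (W k) P x\<bar> \<le> 1" "\<bar>edge_prod (W k) Q x\<bar> \<le> 1" if "x \<in> space (unif_cube {1..n})" for x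
      using edge_prod_bounds[OF graphon_W Field_vertex_pairs[OF P] that]
        edge_prod_bounds[OF graphon_W Field_vertex_pairs[OF Q] that] by auto
  qed (simp_all add: edge_prod_restrict[symmetric])
  finally show ?thesis .
qed

lemma centered_indicator_edge_event_bound:
  "P \<subseteq> vertex_pairs n \<Longrightarrow> \<bar>indicator (edge_event n P) \<omega> - edge_prob n P\<bar> \<le> 1"
  using edge_prob_bounds by (auto simp: indicator_def)

lemma integral_centered_indicators_edge_events:
  assumes P: "P \<subseteq> vertex_pairs n" and Q: "Q \<subseteq> vertex_pairs n"
  shows "(\<integral>\<omega>. (indicator (edge_event n P) \<omega> - edge_prob n P) * (indicator (edge_event n Q) \<omega> - edge_prob n Q) \<partial>M)
       = edge_prob n (P \<union> Q) - edge_prob n P * edge_prob n Q"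
proof -
  have PQ: "P \<union> Q \<subseteq> vertex_pairs n"
    using P Q by simp
  have "(indicator (edge_event n P) \<omega> - edge_prob n P) * (indicator (edge_event n Q) \<omega> - edge_prob n Q)
     = indicator (edge_event n (P \<union> Q)) \<omega> - edge_prob n Q * indicator (edge_event n P) \<omega>
         - edge_prob n P * indicator (edge_event n Q) \<omega> + edge_prob n P * edge_prob n Q" for \<omega>
    by (simp add: edge_event_Un indicator_inter_arith algebra_simps)
  then have "(\<integral>\<omega>. (indicator (edge_event n P) \<omega> - edge_prob n P) * (indicator (edge_event n Q) \<omega> - edge_prob n Q) \<partial>M)
     = (\<integral>\<omega>. indicator (edge_event n (P \<union> Q)) \<omega> - edge_prob n Q * indicator (edge_event n P) \<omega>
         - edge_prob n P * indicator (edge_event n Q) \<omega> + edge_prob n P * edge_prob n Q \<partial>M)"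
    by presburger
  also have "\<dots> = edge_prob n (P \<union> Q) - edge_prob n Q * edge_prob n P - edge_prob n P * edge_prob n Q
                   + edge_prob n P * edge_prob n Q"
    using integrable_indicator_edge_event[OF finite_subset_vertex_pairs[OF P]]
      integrable_indicator_edge_event[OF finite_subset_vertex_pairs[OF Q]]
      integrable_indicator_edge_event[OF finite_subset_vertex_pairs[OF PQ]]
      integral_indicator_edge_event[OF P] integral_indicator_edge_event[OF Q] integral_indicator_edge_event[OF PQ]
    by (simp add: prob_space)
  finally show ?thesis
    by simp
qed

lemma second_moment_edge_count_le:
  fixes J :: "'i set" and P :: "'i \<Rightarrow> (nat \<times> nat) set"
  assumes J: "finite J" and P: "\<And>a. a \<in> J \<Longrightarrow> P a \<subseteq> vertex_pairs n"
  shows "(\<integral>\<omega>. (\<Sum>a\<in>J. indicator (edge_event n (P a)) \<omega> - edge_prob n (P a))\<^sup>2 \<partial>M)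
           \<le> card {p \<in> J \<times> J. Field (P (fst p)) \<inter> Field (P (snd p)) \<noteq> {}}"
proof -
  define Z where "Z a \<omega> = indicator (edge_event n (P a)) \<omega> - edge_prob n (P a)" for a \<omega>
  define cov where "cov p = edge_prob n (P (fst p) \<union> P (snd p)) - edge_prob n (P (fst p)) * edge_prob n (P (snd p))"
    for p
  define overlap where "overlap = {p \<in> J \<times> J. Field (P (fst p)) \<inter> Field (P (snd p)) \<noteq> {}}"
  have Z_int: "integrable M (\<lambda>\<omega>. Z a \<omega> * Z b \<omega>)" if "a \<in> J" "b \<in> J" for a b
  proof (rule integrable_const_bound[where B = 1])
    have "finite (P a)" "finite (P b)"
      using P that finite_subset_vertex_pairs by blast+
    then show "(\<lambda>\<omega>. Z a \<omega> * Z b \<omega>) \<in> borel_measurable M"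
      unfolding Z_def by measurable
    show "AE \<omega> in M. norm (Z a \<omega> * Z b \<omega>) \<le> 1"
      using centered_indicator_edge_event_bound[OF P[OF that(1)]] centered_indicator_edge_event_bound[OF P[OF that(2)]]
      by (auto simp: Z_def abs_mult intro!: mult_le_one)
  qed
  have "(\<integral>\<omega>. (\<Sum>a\<in>J. Z a \<omega>)\<^sup>2 \<partial>M) = (\<Sum>a\<in>J. \<Sum>b\<in>J. \<integral>\<omega>. Z a \<omega> * Z b \<omega> \<partial>M)"
    using Z_int by (simp add: power2_eq_square sum_product Bochner_Integration.integral_sum Bochner_Integration.integrable_sum)
  also have "\<dots> = (\<Sum>p\<in>J \<times> J. cov p)"
    unfolding sum.cartesian_product Z_def cov_def using P
    by (intro sum.cong refl) (auto simp: integral_centered_indicators_edge_events)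
  also have "\<dots> = (\<Sum>p\<in>overlap. cov p)"
    using J P by (intro sum.mono_neutral_right) (auto simp: overlap_def cov_def edge_prob_Un_disjoint)
  also have "\<dots> \<le> (\<Sum>p\<in>overlap. 1)"
  proof (rule sum_mono)
    fix p assume "p \<in> overlap"
    then have "fst p \<in> J" "snd p \<in> J"
      by (auto simp: overlap_def)
    then have "P (fst p) \<union> P (snd p) \<subseteq> vertex_pairs n" "P (fst p) \<subseteq> vertex_pairs n" "P (snd p) \<subseteq> vertex_pairs n"
      using P by auto
    then show "cov p \<le> 1"
      unfolding cov_def using edge_prob_bounds by (smt (verit) mult_nonneg_nonneg)
  qed
  finally show ?thesis
    by (simp add: Z_def overlap_def)
qed

lemma edge_count_deviation_le:
  fixes J :: "'i set" and P :: "'i \<Rightarrow> (nat \<times> nat) set"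
  assumes J: "finite J" and P: "\<And>a. a \<in> J \<Longrightarrow> P a \<subseteq> vertex_pairs n" and \<delta>: "\<delta> > 0" and D: "D > 0"
  shows "prob {\<omega> \<in> space M. \<delta> \<le> \<bar>(\<Sum>a\<in>J. indicator (edge_event n (P a)) \<omega>) / D - (\<Sum>a\<in>J. edge_prob n (P a)) / D\<bar>}
           \<le> card {p \<in> J \<times> J. Field (P (fst p)) \<inter> Field (P (snd p)) \<noteq> {}} / (D * \<delta>)\<^sup>2"
proof -
  define u where "u \<omega> = (\<Sum>a\<in>J. indicator (edge_event n (P a)) \<omega> - edge_prob n (P a))\<^sup>2" for \<omega>
  have "finite (P a)" if "a \<in> J" for a
    using P that finite_subset_vertex_pairs by blast+
  then have u_meas [measurable]: "u \<in> borel_measurable M"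
    unfolding u_def by measurable
  have "\<bar>\<Sum>a\<in>J. indicator (edge_event n (P a)) \<omega> - edge_prob n (P a)\<bar> \<le> card J" for \<omega>
  proof -
    have "\<bar>\<Sum>a\<in>J. indicator (edge_event n (P a)) \<omega> - edge_prob n (P a)\<bar>
        \<le> (\<Sum>a\<in>J. \<bar>indicator (edge_event n (P a)) \<omega> - edge_prob n (P a)\<bar>)"
      by (rule sum_abs)
    also have "\<dots> \<le> (\<Sum>a\<in>J. 1)"
      by (intro sum_mono centered_indicator_edge_event_bound P)
    finally show ?thesis
      by simp
  qed
  then have "\<bar>u \<omega>\<bar> \<le> (card J)\<^sup>2" for \<omega>
    unfolding u_def by (simp add: power_mono abs_le_square_iff[symmetric])
  then have u_int: "integrable M u"
    by (intro integrable_const_bound[where B = "(card J)\<^sup>2"] AE_I2) auto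
  have "{\<omega> \<in> space M. \<delta> \<le> \<bar>(\<Sum>a\<in>J. indicator (edge_event n (P a)) \<omega>) / D - (\<Sum>a\<in>J. edge_prob n (P a)) / D\<bar>}
      = {\<omega> \<in> space M. (D * \<delta>)\<^sup>2 \<le> u \<omega>}"
  proof -
    have "\<delta> \<le> \<bar>s / D\<bar> \<longleftrightarrow> \<bar>D * \<delta>\<bar> \<le> \<bar>s\<bar>" for s
      using D \<delta> by (simp add: le_divide_eq abs_mult mult.commute[of D])
    then have "\<delta> \<le> \<bar>s / D\<bar> \<longleftrightarrow> (D * \<delta>)\<^sup>2 \<le> s\<^sup>2" for s
      by (simp only: abs_le_square_iff)
    then show ?thesis
      by (simp only: u_def sum_subtractf diff_divide_distrib[symmetric])
  qed
  also have "prob \<dots> \<le> (\<integral>\<omega>. u \<omega> \<partial>M) / (D * \<delta>)\<^sup>2"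
    using D \<delta> by (intro integral_Markov_inequality_measure[OF u_int]) (auto simp: u_def)
  also have "\<dots> \<le> card {p \<in> J \<times> J. Field (P (fst p)) \<inter> Field (P (snd p)) \<noteq> {}} / (D * \<delta>)\<^sup>2"
    unfolding u_def by (intro divide_right_mono second_moment_edge_count_le[OF J P]) auto
  finally show ?thesis .
qed

end

section \<open>Copies of \<open>F\<close> in \<open>G\<^sub>n\<close>\<close>

lemma prod_if_one_zero:
  assumes "finite E"
  shows "(\<Prod>(a,b)\<in>E. if P a b then 1 else 0 :: real) = (if \<forall>(a,b)\<in>E. P a b then 1 else 0)"
proof (cases "\<forall>(a,b)\<in>E. P a b")
  case False
  then obtain a b where "(a, b) \<in> E" "\<not> P a b"
    by auto
  then have "(\<Prod>(a,b)\<in>E. if P a b then 1 else 0 :: real) = 0"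
    by (intro prod_zero[OF assms]) force
  then show ?thesis
    using False by simp
next
  case True
  then have "(\<Prod>(a,b)\<in>E. if P a b then 1 else 0 :: real) = 1"
    by (intro prod.neutral) auto
  then show ?thesis
    using True by simp
qed

lemma card_aut_ge_1: "1 \<le> card (aut m E)"
proof -
  have "aut m E \<subseteq> {p. p permutes {1..m}}"
    unfolding aut_def by auto
  then have "finite (aut m E)"
    by (rule finite_subset) (simp add: finite_permutations)
  moreover have "id \<in> aut m E"
    unfolding aut_def by (auto simp: permutes_id)
  ultimately show ?thesis
    by (metis One_nat_def Suc_leI card_gt_0_iff empty_iff)
qed

lemma sqrt_real_at_top: "filterlim (\<lambda>n. sqrt (real n)) at_top sequentially"
  by (rule filterlim_compose[OF sqrt_at_top filterlim_real_sequentially])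

locale pattern_multiplex = multiplex M d W \<xi> A k + pattern_graphon "W k" m E
  for M :: "'a measure" and d W \<xi> A k m E +
  assumes pattern_nonempty: "1 \<le> m"
begin

abbreviation dens :: real where
  "dens \<equiv> hom_density m E (W k)"

lemma layer_adj_copy_iff:
  assumes f: "f \<in> inj_maps m n" and \<omega>: "\<omega> \<in> space M"
  shows "(\<forall>(a,b)\<in>E. layer_adj n A k \<omega> (f a) (f b)) \<longleftrightarrow> \<omega> \<in> edge_event n (copy_edges f)"
proof -
  have "layer_adj n A k \<omega> (f a) (f b) \<longleftrightarrow> (\<forall>l\<in>k. A n l (fst (edge_map f (a,b))) (snd (edge_map f (a,b))) \<omega>)"
    if "(a, b) \<in> E" for a b
  proof -
    have "a \<in> {1..m}" "b \<in> {1..m}" "a \<noteq> b"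
      using edge_bounds that by auto
    then have "f a \<noteq> f b" "f a \<in> {1..n}" "f b \<in> {1..n}"
      using inj_mapsD[OF f] by (auto dest: inj_onD)
    then show ?thesis
      unfolding layer_adj_def madj_def edge_map_def by (auto simp: min_def max_def)
  qed
  then show ?thesis
    unfolding edge_event_def using \<omega> by fastforce
qed

lemma inj_homs_layer_adj:
  assumes "\<omega> \<in> space M"
  shows "inj_homs m E n (layer_adj n A k \<omega>) = {\<phi> \<in> inj_maps m n. \<omega> \<in> edge_event n (copy_edges \<phi>)}"
  using layer_adj_copy_iff[OF _ assms] unfolding inj_homs_def by blast

definition rooted_count :: "nat \<Rightarrow> nat \<Rightarrow> nat \<Rightarrow> 'a \<Rightarrow> real" where
  "rooted_count n a v \<omega> = (\<Sum>f\<in>{f \<in> inj_maps m n. f a = v}. indicator (edge_event n (copy_edges f)) \<omega>)"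

definition hom_count :: "nat \<Rightarrow> 'a \<Rightarrow> real" where
  "hom_count n \<omega> = (\<Sum>f\<in>inj_maps m n. indicator (edge_event n (copy_edges f)) \<omega>)"

lemma t_tilde_eq:
  assumes "\<omega> \<in> space M"
  shows "t_tilde a v m E n (layer_adj n A k \<omega>) = rooted_count n a v \<omega> / real n ^ (m - 1)"
proof -
  have "real (card {\<phi> \<in> inj_homs m E n (layer_adj n A k \<omega>). \<phi> a = v}) = rooted_count n a v \<omega>"
    unfolding inj_homs_layer_adj[OF assms] rooted_count_def indicator_def using finite_inj_maps
    by (simp add: Int_def conj_commute)
  then show ?thesis
    unfolding t_tilde_def by simp
qed

lemma t_hat_eq:
  assumes "\<omega> \<in> space M"
  shows "t_hat m E n (layer_adj n A k \<omega>) = hom_count n \<omega> / real (card (inj_maps m n))"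
proof -
  have "(\<Sum>s\<in>inj_maps m n. \<Prod>(a,b)\<in>E. if layer_adj n A k \<omega> (s a) (s b) then 1 else 0 :: real)
      = hom_count n \<omega>"
    unfolding hom_count_def prod_if_one_zero[OF finite_edges]
    using layer_adj_copy_iff[OF _ assms] by (intro sum.cong refl) (simp add: indicator_def)
  then show ?thesis
    unfolding t_hat_def by simp
qed

lemma sum_rooted_count:
  assumes "a \<in> {1..m}"
  shows "(\<Sum>v=1..n. rooted_count n a v \<omega>) = hom_count n \<omega>"
  unfolding rooted_count_def hom_count_def
  using finite_inj_maps inj_mapsD(2)[OF _ assms] by (intro sum.group) auto

definition glued_pairs :: "nat \<Rightarrow> nat \<Rightarrow> nat \<Rightarrow> ((nat \<Rightarrow> nat) \<times> (nat \<Rightarrow> nat)) set" where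
  "glued_pairs n a b = {(f, g). f \<in> inj_maps m n \<and> g \<in> inj_maps m n \<and> f a = g b}"

definition glued_index :: "nat \<Rightarrow> (nat \<times> nat \<times> (nat \<Rightarrow> nat) \<times> (nat \<Rightarrow> nat)) set" where
  "glued_index n = (SIGMA a:{1..m}. SIGMA b:{1..m}. glued_pairs n a b)"

definition glued_edges :: "nat \<times> nat \<times> (nat \<Rightarrow> nat) \<times> (nat \<Rightarrow> nat) \<Rightarrow> (nat \<times> nat) set" where
  "glued_edges = (\<lambda>(a, b, f, g). copy_edges f \<union> copy_edges g)"

definition glued_count :: "nat \<Rightarrow> 'a \<Rightarrow> real" where
  "glued_count n \<omega> = (\<Sum>\<alpha>\<in>glued_index n. indicator (edge_event n (glued_edges \<alpha>)) \<omega>)"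

lemma finite_glued_pairs: "finite (glued_pairs n a b)"
  by (rule finite_subset[of _ "inj_maps m n \<times> inj_maps m n"]) (auto simp: glued_pairs_def finite_inj_maps)

lemma finite_glued_index: "finite (glued_index n)"
  unfolding glued_index_def by (intro finite_SigmaI finite_glued_pairs) auto

lemma glued_edges_subset_vertex_pairs: "\<alpha> \<in> glued_index n \<Longrightarrow> glued_edges \<alpha> \<subseteq> vertex_pairs n"
  by (auto simp: glued_index_def glued_pairs_def glued_edges_def dest: copy_edges_subset_vertex_pairs)

lemma sum_glued_index:
  "(\<Sum>\<alpha>\<in>glued_index n. h \<alpha>) = (\<Sum>a=1..m. \<Sum>b=1..m. \<Sum>p\<in>glued_pairs n a b. h (a, b, p))"
proof -
  have "(\<Sum>a=1..m. \<Sum>b=1..m. \<Sum>p\<in>glued_pairs n a b. h (a, b, p))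
      = (\<Sum>a=1..m. \<Sum>(b, p)\<in>Sigma {1..m} (glued_pairs n a). h (a, b, p))"
    by (intro sum.cong refl sum.Sigma) (auto simp: finite_glued_pairs)
  also have "\<dots> = (\<Sum>\<alpha>\<in>glued_index n. h \<alpha>)"
    unfolding glued_index_def
    by (subst sum.Sigma) (auto simp: finite_glued_pairs split_def intro!: finite_SigmaI)
  finally show ?thesis ..
qed

lemma rooted_count_mult:
  "rooted_count n a v \<omega> * rooted_count n b v \<omega>
     = (\<Sum>(f, g)\<in>{f \<in> inj_maps m n. f a = v} \<times> {g \<in> inj_maps m n. g b = v}.
          indicator (edge_event n (copy_edges f \<union> copy_edges g)) \<omega>)"
  unfolding rooted_count_def sum_product sum.cartesian_product
  by (simp add: edge_event_Un indicator_inter_arith split_def)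

lemma sum_rooted_count_mult:
  assumes "a \<in> {1..m}"
  shows "(\<Sum>v=1..n. rooted_count n a v \<omega> * rooted_count n b v \<omega>)
           = (\<Sum>p\<in>glued_pairs n a b. indicator (edge_event n (copy_edges (fst p) \<union> copy_edges (snd p))) \<omega>)"
proof -
  have "{f \<in> inj_maps m n. f a = v} \<times> {g \<in> inj_maps m n. g b = v} = {p \<in> glued_pairs n a b. fst p a = v}" for v
    by (auto simp: glued_pairs_def)
  then have "(\<Sum>v=1..n. rooted_count n a v \<omega> * rooted_count n b v \<omega>)
      = (\<Sum>v=1..n. \<Sum>p\<in>{p \<in> glued_pairs n a b. fst p a = v}.
           indicator (edge_event n (copy_edges (fst p) \<union> copy_edges (snd p))) \<omega>)"
    by (simp add: rooted_count_mult split_def)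
  also have "\<dots> = (\<Sum>p\<in>glued_pairs n a b. indicator (edge_event n (copy_edges (fst p) \<union> copy_edges (snd p))) \<omega>)"
  proof (rule sum.group[OF finite_glued_pairs finite_atLeastAtMost])
    show "(\<lambda>p. fst p a) ` glued_pairs n a b \<subseteq> {1..n}"
      using inj_mapsD(2)[OF _ assms] by (force simp: glued_pairs_def)
  qed
  finally show ?thesis .
qed

lemma t_hat_join_eq:
  assumes "\<omega> \<in> space M"
  shows "t_hat_join a b m E n (layer_adj n A k \<omega>)
           = (\<Sum>v=1..n. rooted_count n a v \<omega> * rooted_count n b v \<omega>) / (real n ^ m * real n ^ (m - 1))"
proof -
  have "real n ^ (m - 1) * real n ^ (m - 1) * real n = real n ^ m * real n ^ (m - 1)"
    using pattern_nonempty by (cases m) (simp_all add: algebra_simps)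
  then show ?thesis
    unfolding t_hat_join_def t_tilde_eq[OF assms] by (simp add: sum_divide_distrib[symmetric] mult.assoc)
qed

lemma sum_t_hat_join_eq:
  assumes "\<omega> \<in> space M"
  shows "(\<Sum>a=1..m. \<Sum>b=1..m. t_hat_join a b m E n (layer_adj n A k \<omega>))
           = glued_count n \<omega> / (real n ^ m * real n ^ (m - 1))"
proof -
  have "(\<Sum>a=1..m. \<Sum>b=1..m. t_hat_join a b m E n (layer_adj n A k \<omega>))
      = (\<Sum>a=1..m. \<Sum>b=1..m. \<Sum>v=1..n. rooted_count n a v \<omega> * rooted_count n b v \<omega>)
          / (real n ^ m * real n ^ (m - 1))"
    unfolding t_hat_join_eq[OF assms] by (simp add: sum_divide_distrib[symmetric])
  also have "(\<Sum>a=1..m. \<Sum>b=1..m. \<Sum>v=1..n. rooted_count n a v \<omega> * rooted_count n b v \<omega>) = glued_count n \<omega>"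
    unfolding glued_count_def sum_glued_index glued_edges_def split_def fst_conv snd_conv
    by (rule sum.cong[OF refl sum.cong[OF refl sum_rooted_count_mult]])
  finally show ?thesis .
qed

lemma sum_t_hat_join_ge:
  assumes "\<omega> \<in> space M" "1 \<le> n"
  shows "real m ^ 2 * (hom_count n \<omega> / real n ^ m)\<^sup>2
           \<le> (\<Sum>a=1..m. \<Sum>b=1..m. t_hat_join a b m E n (layer_adj n A k \<omega>))"
proof -
  define s where "s v = (\<Sum>a=1..m. rooted_count n a v \<omega>)" for v
  define D where "D = real n ^ m * real n ^ (m - 1)"
  have "(\<Sum>a=1..m. \<Sum>b=1..m. \<Sum>v=1..n. rooted_count n a v \<omega> * rooted_count n b v \<omega>)
      = (\<Sum>a=1..m. \<Sum>v=1..n. \<Sum>b=1..m. rooted_count n a v \<omega> * rooted_count n b v \<omega>)"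
    by (intro sum.cong refl sum.swap)
  also have "\<dots> = (\<Sum>v=1..n. (s v)\<^sup>2)"
    unfolding s_def power2_eq_square sum_product by (rule sum.swap)
  finally have sums: "(\<Sum>a=1..m. \<Sum>b=1..m. t_hat_join a b m E n (layer_adj n A k \<omega>)) = (\<Sum>v=1..n. (s v)\<^sup>2) / D"
    unfolding t_hat_join_eq[OF assms(1)] D_def by (simp add: sum_divide_distrib[symmetric])
  moreover have "(\<Sum>v=1..n. s v) = real m * hom_count n \<omega>"
  proof -
    have "(\<Sum>v=1..n. s v) = (\<Sum>a=1..m. \<Sum>v=1..n. rooted_count n a v \<omega>)"
      unfolding s_def by (rule sum.swap)
    also have "\<dots> = (\<Sum>a=1..m. hom_count n \<omega>)"
      by (rule sum.cong[OF refl sum_rooted_count])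
    finally show ?thesis
      by simp
  qed
  moreover have "D * real n = (real n ^ m)\<^sup>2"
    unfolding D_def using pattern_nonempty by (cases m) (simp_all add: power2_eq_square)
  moreover have D_pos: "D > 0"
    unfolding D_def using assms(2) by simp
  ultimately have "real m ^ 2 * (hom_count n \<omega> / real n ^ m)\<^sup>2 = (\<Sum>v=1..n. s v)\<^sup>2 / (D * real n)"
    by (simp add: power_divide power_mult_distrib)
  also have "\<dots> \<le> ((\<Sum>v=1..n. (s v)\<^sup>2) * real n) / (D * real n)"
    using sum_squared_le_sum_of_squares[of s "{1..n}"] D_pos by (intro divide_right_mono) auto
  also have "\<dots> = (\<Sum>a=1..m. \<Sum>b=1..m. t_hat_join a b m E n (layer_adj n A k \<omega>))"
    using sums assms(2) by simp
  finally show ?thesis .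
qed

lemma card_overlapping_copies_le:
  "card {p \<in> inj_maps m n \<times> inj_maps m n. Field (copy_edges (fst p)) \<inter> Field (copy_edges (snd p)) \<noteq> {}}
     \<le> n * ((m * n ^ (m - 1)) * (m * n ^ (m - 1)))"
proof -
  have "card {f \<in> inj_maps m n. u \<in> Field (copy_edges f)} \<le> m * n ^ (m - 1)" for u
  proof -
    have "{f \<in> inj_maps m n. u \<in> Field (copy_edges f)} \<subseteq> {f \<in> all_maps m n. u \<in> f ` {1..m}}"
      using Field_copy_edges inj_maps_subset by blast
    then have "card {f \<in> inj_maps m n. u \<in> Field (copy_edges f)} \<le> card {f \<in> all_maps m n. u \<in> f ` {1..m}}"
      by (rule card_mono[rotated]) simp
    then show ?thesis
      using card_maps_hitting_le by (rule order_trans)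
  qed
  then have "card {p \<in> inj_maps m n \<times> inj_maps m n. Field (copy_edges (fst p)) \<inter> Field (copy_edges (snd p)) \<noteq> {}}
      \<le> card {1..n} * ((m * n ^ (m - 1)) * (m * n ^ (m - 1)))"
    by (intro card_intersecting_pairs_le[OF finite_inj_maps finite_atLeastAtMost] Field_copy_edges_inj_maps)
  then show ?thesis
    by simp
qed

lemma card_glued_pairs_hitting_le:
  assumes "a \<in> {1..m}" "b \<in> {1..m}"
  shows "card {p \<in> glued_pairs n a b. u \<in> fst p ` {1..m} \<or> u \<in> snd p ` {1..m}}
           \<le> 2 * (m * n ^ (m - 1) * n ^ (m - 1))"
proof -
  define S where "S = {f \<in> all_maps m n. u \<in> f ` {1..m}}"
  define X where "X = {(f, g). f \<in> S \<and> g \<in> all_maps m n \<and> g b = f a} \<union> {(f, g). g \<in> S \<and> f \<in> all_maps m n \<and> f a = g b}"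
  have "{p \<in> glued_pairs n a b. u \<in> fst p ` {1..m} \<or> u \<in> snd p ` {1..m}} \<subseteq> X"
  proof
    fix p assume "p \<in> {p \<in> glued_pairs n a b. u \<in> fst p ` {1..m} \<or> u \<in> snd p ` {1..m}}"
    then obtain f g where "p = (f, g)" "f \<in> inj_maps m n" "g \<in> inj_maps m n" "f a = g b"
      "u \<in> f ` {1..m} \<or> u \<in> g ` {1..m}"
      by (auto simp: glued_pairs_def)
    moreover have "f \<in> all_maps m n" "g \<in> all_maps m n"
      using calculation(2,3) inj_maps_subset by blast+
    ultimately show "p \<in> X"
      unfolding X_def S_def by auto
  qed
  moreover have "X \<subseteq> all_maps m n \<times> all_maps m n"
    unfolding X_def S_def by blast
  then have "finite X"
    by (rule finite_subset) (intro finite_cartesian_product finite_all_maps)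
  ultimately have "card {p \<in> glued_pairs n a b. u \<in> fst p ` {1..m} \<or> u \<in> snd p ` {1..m}} \<le> card X"
    by (rule card_mono[rotated])
  also have "\<dots> \<le> 2 * (card S * n ^ (m - 1))"
    unfolding X_def by (rule card_glued_maps_le[OF _ assms]) (simp add: S_def)
  also have "\<dots> \<le> 2 * (m * n ^ (m - 1) * n ^ (m - 1))"
    using card_maps_hitting_le[of m n u] by (simp add: S_def)
  finally show ?thesis .
qed

lemma card_glued_index_hitting_le:
  "card {\<alpha> \<in> glued_index n. u \<in> Field (glued_edges \<alpha>)} \<le> m * m * (2 * (m * n ^ (m - 1) * n ^ (m - 1)))"
proof -
  define H where "H a b = {p \<in> glued_pairs n a b. u \<in> fst p ` {1..m} \<or> u \<in> snd p ` {1..m}}" for a b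
  have fin: "finite (H a b)" for a b
    unfolding H_def using finite_glued_pairs by simp
  have "{\<alpha> \<in> glued_index n. u \<in> Field (glued_edges \<alpha>)} \<subseteq> (\<Union>a\<in>{1..m}. \<Union>b\<in>{1..m}. (\<lambda>p. (a, b, p)) ` H a b)"
  proof
    fix \<alpha> assume "\<alpha> \<in> {\<alpha> \<in> glued_index n. u \<in> Field (glued_edges \<alpha>)}"
    then obtain a b f g where "\<alpha> = (a, b, f, g)" "a \<in> {1..m}" "b \<in> {1..m}" "(f, g) \<in> glued_pairs n a b"
      "u \<in> Field (copy_edges f) \<union> Field (copy_edges g)"
      by (auto simp: glued_index_def glued_edges_def)
    moreover have "u \<in> f ` {1..m} \<or> u \<in> g ` {1..m}"
      using Field_copy_edges calculation(5) by blast
    ultimately show "\<alpha> \<in> (\<Union>a\<in>{1..m}. \<Union>b\<in>{1..m}. (\<lambda>p. (a, b, p)) ` H a b)"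
      unfolding H_def by force
  qed
  then have "card {\<alpha> \<in> glued_index n. u \<in> Field (glued_edges \<alpha>)}
      \<le> card (\<Union>a\<in>{1..m}. \<Union>b\<in>{1..m}. (\<lambda>p. (a, b, p)) ` H a b)"
    by (rule card_mono[rotated]) (simp add: fin)
  also have "\<dots> \<le> (\<Sum>a=1..m. card (\<Union>b\<in>{1..m}. (\<lambda>p. (a, b, p)) ` H a b))"
    by (rule card_UN_le) simp
  also have "\<dots> \<le> (\<Sum>a=1..m. \<Sum>b=1..m. card ((\<lambda>p. (a, b, p)) ` H a b))"
    by (intro sum_mono card_UN_le) simp
  also have "\<dots> \<le> (\<Sum>a=1..m. \<Sum>b=1..m. card (H a b))"
    by (intro sum_mono card_image_le fin)
  also have "\<dots> \<le> (\<Sum>a=1..m. \<Sum>b=1..m. 2 * (m * n ^ (m - 1) * n ^ (m - 1)))"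
    unfolding H_def by (intro sum_mono card_glued_pairs_hitting_le)
  finally show ?thesis
    by simp
qed

lemma card_overlapping_glued_le:
  "card {p \<in> glued_index n \<times> glued_index n. Field (glued_edges (fst p)) \<inter> Field (glued_edges (snd p)) \<noteq> {}}
     \<le> n * ((m * m * (2 * (m * n ^ (m - 1) * n ^ (m - 1)))) * (m * m * (2 * (m * n ^ (m - 1) * n ^ (m - 1)))))"
  using card_intersecting_pairs_le[OF finite_glued_index finite_atLeastAtMost
      Field_vertex_pairs[OF glued_edges_subset_vertex_pairs] card_glued_index_hitting_le]
  by simp

lemma edge_prob_copy: "f \<in> inj_maps m n \<Longrightarrow> edge_prob n (copy_edges f) = dens"
  unfolding edge_prob_def by (rule integral_copy)

lemma integrable_hom_count: "integrable M (hom_count n)"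
  unfolding hom_count_def
  by (intro Bochner_Integration.integrable_sum integrable_indicator_edge_event finite_subset_vertex_pairs
      copy_edges_subset_vertex_pairs)

lemma expectation_hom_count: "(\<integral>\<omega>. hom_count n \<omega> \<partial>M) = real (card (inj_maps m n)) * dens"
proof -
  have "(\<integral>\<omega>. hom_count n \<omega> \<partial>M) = (\<Sum>f\<in>inj_maps m n. \<integral>\<omega>. indicator (edge_event n (copy_edges f)) \<omega> \<partial>M)"
    unfolding hom_count_def
    by (intro Bochner_Integration.integral_sum integrable_indicator_edge_event finite_subset_vertex_pairs
        copy_edges_subset_vertex_pairs)
  also have "\<dots> = (\<Sum>f\<in>inj_maps m n. dens)"
    by (intro sum.cong refl trans[OF integral_indicator_edge_event edge_prob_copy] copy_edges_subset_vertex_pairs)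
  finally show ?thesis
    by simp
qed

lemma integrable_glued_count: "integrable M (glued_count n)"
  unfolding glued_count_def
  by (intro Bochner_Integration.integrable_sum integrable_indicator_edge_event finite_subset_vertex_pairs
      glued_edges_subset_vertex_pairs)

lemma expectation_glued_count:
  "(\<integral>\<omega>. glued_count n \<omega> \<partial>M) = (\<Sum>\<alpha>\<in>glued_index n. edge_prob n (glued_edges \<alpha>))"
proof -
  have "(\<integral>\<omega>. glued_count n \<omega> \<partial>M) = (\<Sum>\<alpha>\<in>glued_index n. \<integral>\<omega>. indicator (edge_event n (glued_edges \<alpha>)) \<omega> \<partial>M)"
    unfolding glued_count_def
    by (intro Bochner_Integration.integral_sum integrable_indicator_edge_event finite_subset_vertex_pairs
        glued_edges_subset_vertex_pairs)
  also have "\<dots> = (\<Sum>\<alpha>\<in>glued_index n. edge_prob n (glued_edges \<alpha>))"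
    by (intro sum.cong refl integral_indicator_edge_event glued_edges_subset_vertex_pairs)
  finally show ?thesis .
qed


lemma card_glued_pairs_le:
  assumes "b \<in> {1..m}"
  shows "card (glued_pairs n a b) \<le> n ^ m * n ^ (m - 1)"
proof -
  have "glued_pairs n a b \<subseteq> {(f, g). f \<in> all_maps m n \<and> g \<in> all_maps m n \<and> g b = f a}"
    using inj_maps_subset by (auto simp: glued_pairs_def)
  then have "card (glued_pairs n a b) \<le> card {(f, g). f \<in> all_maps m n \<and> g \<in> all_maps m n \<and> g b = f a}"
    by (rule card_mono[rotated])
       (rule finite_subset[of _ "all_maps m n \<times> all_maps m n"], auto simp: finite_all_maps)
  also have "\<dots> \<le> n ^ m * n ^ (m - 1)"
    using card_map_pairs_le[OF subset_refl assms, where g = "\<lambda>f. f a"] by (simp add: card_PiE)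
  finally show ?thesis .
qed

lemma card_glued_pairs_ge:
  assumes a: "a \<in> {1..m}" and b: "b \<in> {1..m}"
  shows "n ^ m * n ^ (m - 1) \<le> card (glued_pairs n a b) + 2 * (m * m * n ^ (m - 1) * n ^ (m - 1))"
proof -
  define B where "B = {(f, g). f \<in> all_maps m n - inj_maps m n \<and> g \<in> all_maps m n \<and> g b = f a}
    \<union> {(f, g). g \<in> all_maps m n - inj_maps m n \<and> f \<in> all_maps m n \<and> f a = g b}"
  have "card {(f, g). f \<in> all_maps m n \<and> g \<in> all_maps m n \<and> g b = f a} = card (all_maps m n) * n ^ (m - 1)"
    by (rule card_map_pairs[OF b]) (use a in \<open>auto simp: finite_all_maps\<close>)
  then have "n ^ m * n ^ (m - 1) = card {(f, g). f \<in> all_maps m n \<and> g \<in> all_maps m n \<and> g b = f a}"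
    by (simp add: card_PiE)
  also have "\<dots> \<le> card (glued_pairs n a b \<union> B)"
  proof (rule card_mono)
    have "glued_pairs n a b \<union> B \<subseteq> all_maps m n \<times> all_maps m n"
      using inj_maps_subset unfolding B_def glued_pairs_def by blast
    then show "finite (glued_pairs n a b \<union> B)"
      by (rule finite_subset) (intro finite_cartesian_product finite_all_maps)
    show "{(f, g). f \<in> all_maps m n \<and> g \<in> all_maps m n \<and> g b = f a} \<subseteq> glued_pairs n a b \<union> B"
      unfolding B_def glued_pairs_def by auto
  qed
  also have "\<dots> \<le> card (glued_pairs n a b) + card B"
    by (rule card_Un_le)
  also have "card B \<le> 2 * (card (all_maps m n - inj_maps m n) * n ^ (m - 1))"
    unfolding B_def by (rule card_glued_maps_le[OF _ a b]) auto
  also have "\<dots> \<le> 2 * (m * m * n ^ (m - 1) * n ^ (m - 1))"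
    using card_non_inj_maps_le[of m n] by simp
  finally show ?thesis
    by simp
qed

definition overlapping_glued_pairs :: "nat \<Rightarrow> nat \<Rightarrow> nat \<Rightarrow> ((nat \<Rightarrow> nat) \<times> (nat \<Rightarrow> nat)) set" where
  "overlapping_glued_pairs n a b =
     {(f, g) \<in> glued_pairs n a b. f ` ({1..m} - {a}) \<inter> g ` ({1..m} - {b}) \<noteq> {}}"

lemma card_overlapping_glued_pairs_le:
  assumes a: "a \<in> {1..m}" and b: "b \<in> {1..m}"
  shows "card (overlapping_glued_pairs n a b) \<le> m * m * (n ^ (m - 1) * n ^ (m - 1))"
proof -
  define X where "X c e = {(f, g). f \<in> all_maps m n \<and> g \<in> all_maps m n \<and> g b = f a \<and> g e = f c}" for c e
  have "X c e \<subseteq> all_maps m n \<times> all_maps m n" for c e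
    unfolding X_def by auto
  then have fin: "finite (X c e)" for c e
    by (rule finite_subset) (intro finite_cartesian_product finite_all_maps)
  have "overlapping_glued_pairs n a b \<subseteq> (\<Union>c\<in>{1..m} - {a}. \<Union>e\<in>{1..m} - {b}. X c e)"
  proof
    fix p assume "p \<in> overlapping_glued_pairs n a b"
    then obtain f g c e where "p = (f, g)" "f \<in> inj_maps m n" "g \<in> inj_maps m n" "f a = g b"
      "c \<in> {1..m} - {a}" "e \<in> {1..m} - {b}" "f c = g e"
      unfolding overlapping_glued_pairs_def glued_pairs_def by blast
    moreover have "f \<in> all_maps m n" "g \<in> all_maps m n"
      using calculation(2,3) inj_maps_subset by blast+
    ultimately have "p \<in> X c e"
      unfolding X_def by simp
    with \<open>c \<in> {1..m} - {a}\<close> \<open>e \<in> {1..m} - {b}\<close>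
    show "p \<in> (\<Union>c\<in>{1..m} - {a}. \<Union>e\<in>{1..m} - {b}. X c e)"
      by blast
  qed
  then have "card (overlapping_glued_pairs n a b) \<le> card (\<Union>c\<in>{1..m} - {a}. \<Union>e\<in>{1..m} - {b}. X c e)"
    by (rule card_mono[rotated]) (simp add: fin)
  also have "\<dots> \<le> (\<Sum>c\<in>{1..m} - {a}. card (\<Union>e\<in>{1..m} - {b}. X c e))"
    by (rule card_UN_le) simp
  also have "\<dots> \<le> (\<Sum>c\<in>{1..m} - {a}. \<Sum>e\<in>{1..m} - {b}. card (X c e))"
    by (intro sum_mono card_UN_le) simp
  also have "\<dots> \<le> (\<Sum>c\<in>{1..m} - {a}. \<Sum>e\<in>{1..m} - {b}. n ^ (m - 1) * n ^ (m - 1))"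
    unfolding X_def using b by (intro sum_mono card_doubly_glued_maps_le) auto
  also have "\<dots> = card ({1..m} - {a}) * (card ({1..m} - {b}) * (n ^ (m - 1) * n ^ (m - 1)))"
    by simp
  also have "\<dots> \<le> m * (m * (n ^ (m - 1) * n ^ (m - 1)))"
  proof (intro mult_le_mono mult_le_mono1 order_refl)
    show "card ({1..m} - {a}) \<le> m" "card ({1..m} - {b}) \<le> m"
      using card_Diff1_le[of "{1..m}"] by (metis card_atLeastAtMost diff_Suc_1)+
  qed
  finally show ?thesis
    by (simp add: mult.assoc)
qed

definition join_moment :: "nat \<Rightarrow> nat \<Rightarrow> real" where
  "join_moment a b = (\<integral>z. t_root a z * t_root b z \<partial>U01)"

lemma join_moment_bounds:
  assumes "a \<in> {1..m}" "b \<in> {1..m}"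
  shows "0 \<le> join_moment a b \<and> join_moment a b \<le> 1"
  unfolding join_moment_def
  using t_root_bounds[OF assms(1)] t_root_bounds[OF assms(2)]
  by (intro U01.integral_in_unit_interval) (simp add: mult_le_one)

lemma copy_edges_glued_disjoint:
  assumes "(f, g) \<in> glued_pairs n a b - overlapping_glued_pairs n a b" "a \<in> {1..m}"
  shows "copy_edges f \<inter> copy_edges g = {}"
proof -
  have f: "f \<in> inj_maps m n" and glue: "f a = g b"
    and disj: "f ` ({1..m} - {a}) \<inter> g ` ({1..m} - {b}) = {}"
    using assms by (auto simp: glued_pairs_def overlapping_glued_pairs_def)
  have outside: "f x \<notin> g ` {1..m}" if "x \<in> {1..m}" "x \<noteq> a" for x
  proof
    assume "f x \<in> g ` {1..m}"
    then obtain y where "y \<in> {1..m}" "f x = g y"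
      by blast
    moreover have "f x \<noteq> g b"
      using inj_mapsD(1)[OF f] that assms(2) unfolding glue[symmetric] by (auto dest: inj_onD)
    ultimately show False
      using disj that by blast
  qed
  show ?thesis
  proof (rule ccontr)
    assume "copy_edges f \<inter> copy_edges g \<noteq> {}"
    then obtain e where "e \<in> E" "edge_map f e \<in> copy_edges g"
      by blast
    moreover obtain c c' where "e = (c, c')"
      by (cases e)
    ultimately have cc: "(c, c') \<in> E" "edge_map f (c, c') \<in> copy_edges g"
      by simp_all
    then have "f c \<in> Field (copy_edges g)" "f c' \<in> Field (copy_edges g)"
      by (auto simp: edge_map_def min_def max_def Field_def split: if_splits intro: rev_image_eqI)
    moreover have "c \<in> {1..m}" "c' \<in> {1..m}" "c \<noteq> c'"
      using edge_bounds[OF cc(1)] by auto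
    ultimately show False
      using outside Field_copy_edges by blast
  qed
qed

lemma edge_prob_glued:
  assumes "(f, g) \<in> glued_pairs n a b - overlapping_glued_pairs n a b" "a \<in> {1..m}" "b \<in> {1..m}"
  shows "edge_prob n (copy_edges f \<union> copy_edges g) = join_moment a b"
proof -
  have f: "f \<in> inj_maps m n" and g: "g \<in> inj_maps m n" and glue: "f a = g b"
    and disj: "f ` ({1..m} - {a}) \<inter> g ` ({1..m} - {b}) = {}"
    using assms(1) by (auto simp: glued_pairs_def overlapping_glued_pairs_def)
  have "edge_prod (W k) (copy_edges f \<union> copy_edges g) x = edge_prod (W k) (copy_edges f) x * edge_prod (W k) (copy_edges g) x"
    for x
    using copy_edges_glued_disjoint[OF assms(1,2)] f g
    by (intro edge_prod_Un finite_subset_vertex_pairs copy_edges_subset_vertex_pairs)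
  then have "edge_prod (W k) (copy_edges f \<union> copy_edges g)
      = (\<lambda>x. edge_prod (W k) (copy_edges f) x * edge_prod (W k) (copy_edges g) x)"
    by (rule ext)
  then show ?thesis
    unfolding edge_prob_def join_moment_def
    using integral_glued_copies[OF f g assms(2,3) glue disj] by simp
qed

lemma sum_edge_prob_glued_pairs:
  assumes "a \<in> {1..m}" "b \<in> {1..m}"
  shows "(\<Sum>p\<in>glued_pairs n a b. edge_prob n (copy_edges (fst p) \<union> copy_edges (snd p)))
           = real (card (glued_pairs n a b)) * join_moment a b
             + (\<Sum>p\<in>overlapping_glued_pairs n a b. edge_prob n (copy_edges (fst p) \<union> copy_edges (snd p)) - join_moment a b)"
proof -
  have "(\<Sum>p\<in>glued_pairs n a b. edge_prob n (copy_edges (fst p) \<union> copy_edges (snd p)) - join_moment a b)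
      = (\<Sum>p\<in>overlapping_glued_pairs n a b. edge_prob n (copy_edges (fst p) \<union> copy_edges (snd p)) - join_moment a b)"
    using edge_prob_glued[OF _ assms]
    by (intro sum.mono_neutral_right finite_glued_pairs) (auto simp: overlapping_glued_pairs_def)
  then show ?thesis
    by (simp add: sum_subtractf)
qed

lemma sum_overlapping_glued_pairs_le:
  assumes a: "a \<in> {1..m}" and b: "b \<in> {1..m}"
  shows "\<bar>\<Sum>p\<in>overlapping_glued_pairs n a b. edge_prob n (copy_edges (fst p) \<union> copy_edges (snd p)) - join_moment a b\<bar>
           \<le> real m * real m * (real n ^ (m - 1) * real n ^ (m - 1))"
proof -
  have "\<bar>edge_prob n (copy_edges (fst p) \<union> copy_edges (snd p)) - join_moment a b\<bar> \<le> 1"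
    if "p \<in> overlapping_glued_pairs n a b" for p
  proof -
    have "fst p \<in> inj_maps m n" "snd p \<in> inj_maps m n"
      using that by (auto simp: overlapping_glued_pairs_def glued_pairs_def)
    then have "copy_edges (fst p) \<union> copy_edges (snd p) \<subseteq> vertex_pairs n"
      by (simp add: copy_edges_subset_vertex_pairs)
    from edge_prob_bounds[OF this] join_moment_bounds[OF a b] show ?thesis
      by (simp add: abs_le_iff)
  qed
  then have "\<bar>\<Sum>p\<in>overlapping_glued_pairs n a b. edge_prob n (copy_edges (fst p) \<union> copy_edges (snd p)) - join_moment a b\<bar>
      \<le> (\<Sum>p\<in>overlapping_glued_pairs n a b. 1)"
    by (intro order_trans[OF sum_abs] sum_mono)
  also have "\<dots> = real (card (overlapping_glued_pairs n a b))"
    by simp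
  also have "\<dots> \<le> real m * real m * (real n ^ (m - 1) * real n ^ (m - 1))"
    using card_overlapping_glued_pairs_le[OF a b, of n]
    by (simp flip: of_nat_mult of_nat_power of_nat_le_iff)
  finally show ?thesis .
qed

lemma sum_edge_prob_glued_pairs_approx:
  assumes a: "a \<in> {1..m}" and b: "b \<in> {1..m}"
  shows "\<bar>(\<Sum>p\<in>glued_pairs n a b. edge_prob n (copy_edges (fst p) \<union> copy_edges (snd p)))
            - real n ^ m * real n ^ (m - 1) * join_moment a b\<bar>
           \<le> 3 * (real m * real m) * (real n ^ (m - 1) * real n ^ (m - 1))"
proof -
  define D where "D = real n ^ m * real n ^ (m - 1)"
  define N where "N = real m * real m * (real n ^ (m - 1) * real n ^ (m - 1))"
  define K where "K = real (card (glued_pairs n a b))"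
  have q: "0 \<le> join_moment a b" "join_moment a b \<le> 1"
    using join_moment_bounds[OF a b] by auto
  have "K \<le> D" "D \<le> K + 2 * N"
    unfolding K_def D_def N_def
    using card_glued_pairs_le[OF b, of n a] card_glued_pairs_ge[OF a b, of n]
    by (simp_all flip: of_nat_mult of_nat_power of_nat_add of_nat_le_iff add: algebra_simps)
  moreover have "K * join_moment a b - D * join_moment a b = - ((D - K) * join_moment a b)"
    by (simp add: algebra_simps)
  ultimately have "\<bar>K * join_moment a b - D * join_moment a b\<bar> = (D - K) * join_moment a b"
    using q by simp
  also have "\<dots> \<le> D - K"
    using \<open>K \<le> D\<close> q by (simp add: mult_left_le)
  finally have "\<bar>K * join_moment a b - D * join_moment a b\<bar> \<le> 2 * N"
    using \<open>D \<le> K + 2 * N\<close> by linarith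
  moreover have "3 * (real m * real m) * (real n ^ (m - 1) * real n ^ (m - 1)) = 3 * N"
    unfolding N_def by (simp add: mult.assoc)
  ultimately show ?thesis
    using sum_overlapping_glued_pairs_le[OF a b, of n]
    unfolding sum_edge_prob_glued_pairs[OF a b] D_def[symmetric] K_def[symmetric] N_def[symmetric]
    by linarith
qed

definition join_moment_sum :: real where
  "join_moment_sum = (\<Sum>a=1..m. \<Sum>b=1..m. join_moment a b)"

lemma expectation_glued_count_approx:
  "\<bar>(\<integral>\<omega>. glued_count n \<omega> \<partial>M) - real n ^ m * real n ^ (m - 1) * join_moment_sum\<bar>
     \<le> 3 * real m ^ 4 * (real n ^ (m - 1) * real n ^ (m - 1))"
proof -
  define h where "h a b = (\<Sum>p\<in>glued_pairs n a b. edge_prob n (copy_edges (fst p) \<union> copy_edges (snd p)))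
    - real n ^ m * real n ^ (m - 1) * join_moment a b" for a b
  have "(\<integral>\<omega>. glued_count n \<omega> \<partial>M) - real n ^ m * real n ^ (m - 1) * join_moment_sum = (\<Sum>a=1..m. \<Sum>b=1..m. h a b)"
    unfolding expectation_glued_count sum_glued_index join_moment_sum_def h_def glued_edges_def
    by (simp add: sum_subtractf sum_distrib_left split_def)
  also have "\<bar>\<dots>\<bar> \<le> (\<Sum>a=1..m. \<Sum>b=1..m. \<bar>h a b\<bar>)"
    by (rule order_trans[OF sum_abs sum_mono[OF sum_abs]])
  also have "\<dots> \<le> (\<Sum>a=1..m. \<Sum>b=1..m. 3 * (real m * real m) * (real n ^ (m - 1) * real n ^ (m - 1)))"
    unfolding h_def by (intro sum_mono sum_edge_prob_glued_pairs_approx)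
  also have "\<dots> = 3 * real m ^ 4 * (real n ^ (m - 1) * real n ^ (m - 1))"
    by (simp add: power4_eq_xxxx)
  finally show ?thesis .
qed

section \<open>\<open>F\<close>-regularity\<close>

definition root_sum :: "real \<Rightarrow> real" where
  "root_sum z = (\<Sum>a=1..m. t_root a z)"

lemma root_sum_measurable: "root_sum \<in> borel_measurable U01"
  unfolding root_sum_def by (intro borel_measurable_sum t_root_measurable) auto

lemma root_sum_bounds:
  assumes "z \<in> {0..1}"
  shows "0 \<le> root_sum z \<and> root_sum z \<le> real m"
proof
  show "0 \<le> root_sum z"
    unfolding root_sum_def using t_root_bounds[OF _ assms] by (intro sum_nonneg) auto
  have "root_sum z \<le> (\<Sum>a=1..m. 1)"
    unfolding root_sum_def using t_root_bounds[OF _ assms] by (intro sum_mono) auto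
  then show "root_sum z \<le> real m"
    by simp
qed

lemma integrable_root_sum_power: "integrable U01 (\<lambda>z. root_sum z ^ j)"
proof (rule U01.integrable_const_bound[where B = "real m ^ j"])
  show "AE z in U01. norm (root_sum z ^ j) \<le> real m ^ j"
  proof (rule AE_I2)
    fix z assume "z \<in> space U01"
    then have "0 \<le> root_sum z" "root_sum z \<le> real m"
      using root_sum_bounds by auto
    then show "norm (root_sum z ^ j) \<le> real m ^ j"
      by (simp add: power_mono)
  qed
qed (use root_sum_measurable in simp)

lemma expectation_root_sum: "(\<integral>z. root_sum z \<partial>U01) = real m * dens"
proof -
  have "(\<integral>z. root_sum z \<partial>U01) = (\<Sum>a=1..m. \<integral>z. t_root a z \<partial>U01)"
    unfolding root_sum_def
  proof (rule Bochner_Integration.integral_sum)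
    fix a assume "a \<in> {1..m}"
    then show "integrable U01 (t_root a)"
      using t_root_measurable t_root_bounds by (intro U01.integrable_const_bound[where B = 1] AE_I2) auto
  qed
  also have "\<dots> = real m * dens"
    by (simp add: integral_t_root)
  finally show ?thesis .
qed

lemma expectation_root_sum_squared: "(\<integral>z. (root_sum z)\<^sup>2 \<partial>U01) = join_moment_sum"
proof -
  have int: "integrable U01 (\<lambda>z. t_root a z * t_root b z)" if "a \<in> {1..m}" "b \<in> {1..m}" for a b
  proof (rule U01.integrable_const_bound[where B = 1])
    show "AE z in U01. norm (t_root a z * t_root b z) \<le> 1"
      using t_root_bounds[OF that(1)] t_root_bounds[OF that(2)] by (intro AE_I2) (auto simp: abs_mult mult_le_one)
  qed (use t_root_measurable that in simp)
  have "(\<integral>z. (root_sum z)\<^sup>2 \<partial>U01) = (\<integral>z. (\<Sum>a=1..m. \<Sum>b=1..m. t_root a z * t_root b z) \<partial>U01)"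
    unfolding root_sum_def power2_eq_square sum_product ..
  also have "\<dots> = (\<Sum>a=1..m. \<integral>z. (\<Sum>b=1..m. t_root a z * t_root b z) \<partial>U01)"
    using int by (intro Bochner_Integration.integral_sum Bochner_Integration.integrable_sum) auto
  also have "\<dots> = join_moment_sum"
    unfolding join_moment_sum_def join_moment_def
    using int by (intro sum.cong refl Bochner_Integration.integral_sum) auto
  finally show ?thesis .
qed

definition regularity_gap :: real where
  "regularity_gap = join_moment_sum - (real m * dens)\<^sup>2"

lemma regularity_gap_eq_variance: "regularity_gap = U01.variance root_sum"
  unfolding regularity_gap_def
  using U01.variance_eq[of root_sum] integrable_root_sum_power[of 1] integrable_root_sum_power[of 2]
  by (simp add: expectation_root_sum expectation_root_sum_squared)

lemma regularity_gap_nonneg: "0 \<le> regularity_gap"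
  unfolding regularity_gap_eq_variance by (rule U01.variance_positive)

lemma F_regular_iff_regularity_gap: "F_regular m E (W k) \<longleftrightarrow> regularity_gap = 0"
proof -
  have "\<bar>root_sum z - real m * dens\<bar> \<le> real m" if "z \<in> {0..1}" for z
    unfolding abs_le_iff using root_sum_bounds[OF that] hom_density_bounds mult_left_le[of dens "real m"]
      mult_nonneg_nonneg[of "real m" dens] by linarith
  then have "(root_sum z - real m * dens)\<^sup>2 \<le> (real m)\<^sup>2" if "z \<in> {0..1}" for z
    using that by (metis abs_le_square_iff abs_of_nat of_nat_0_le_iff abs_of_nonneg)
  then have int: "integrable U01 (\<lambda>z. (root_sum z - real m * dens)\<^sup>2)"
    using root_sum_measurable by (intro U01.integrable_const_bound[where B = "(real m)\<^sup>2"] AE_I2) auto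
  have "F_regular m E (W k) \<longleftrightarrow> (AE z in U01. (root_sum z - real m * dens)\<^sup>2 = 0)"
    unfolding F_regular_def root_sum_def using pattern_nonempty by (intro AE_cong) (auto simp: field_simps)
  also have "\<dots> \<longleftrightarrow> U01.variance root_sum = 0"
    unfolding expectation_root_sum by (rule integral_nonneg_eq_0_iff_AE[OF int, symmetric]) simp
  finally show ?thesis
    unfolding regularity_gap_eq_variance .
qed

section \<open>Concentration and the two regimes\<close>

definition hom_frac :: "nat \<Rightarrow> 'a \<Rightarrow> real" where
  "hom_frac n \<omega> = hom_count n \<omega> / real n ^ m"

definition join_stat :: "nat \<Rightarrow> 'a \<Rightarrow> real" where
  "join_stat n \<omega> = glued_count n \<omega> / (real n ^ m * real n ^ (m - 1))"

definition inj_ratio :: "nat \<Rightarrow> real" where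
  "inj_ratio n = real (card (inj_maps m n)) / real n ^ m"

definition join_defect :: "nat \<Rightarrow> 'a \<Rightarrow> real" where
  "join_defect n \<omega> = join_stat n \<omega> - real m ^ 2 * (hom_frac n \<omega>)\<^sup>2"

lemma hom_count_bounds: "0 \<le> hom_count n \<omega> \<and> hom_count n \<omega> \<le> real (card (inj_maps m n))"
proof
  show "0 \<le> hom_count n \<omega>"
    unfolding hom_count_def by (intro sum_nonneg) simp
  have "hom_count n \<omega> \<le> (\<Sum>f\<in>inj_maps m n. 1)"
    unfolding hom_count_def by (intro sum_mono) (simp add: indicator_def)
  then show "hom_count n \<omega> \<le> real (card (inj_maps m n))"
    by simp
qed

lemma inj_ratio_bounds:
  assumes "1 \<le> n"
  shows "1 - real (m * m) / real n \<le> inj_ratio n" "inj_ratio n \<le> 1"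
proof -
  have pos: "real n ^ m > 0"
    using assms by simp
  show "inj_ratio n \<le> 1"
    unfolding inj_ratio_def using card_inj_maps_le[of m n] pos
    by (simp add: divide_le_eq_1 flip: of_nat_power of_nat_le_iff)
  have "(real n ^ m - real (m * m) * real n ^ (m - 1)) / real n ^ m = 1 - real (m * m) / real n"
    using pattern_nonempty assms by (cases m) (simp_all add: field_simps)
  then show "1 - real (m * m) / real n \<le> inj_ratio n"
    unfolding inj_ratio_def using card_inj_maps_ge[of n m] pos by (metis divide_right_mono less_imp_le)
qed

(* This also covers the case of no injective maps, where both sides are 0 since x / 0 = 0. *)
lemma hom_frac_eq: "hom_frac n \<omega> = hom_count n \<omega> / real (card (inj_maps m n)) * inj_ratio n"
proof (cases "card (inj_maps m n) = 0")
  case True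
  then have "inj_maps m n = {}"
    using finite_inj_maps by simp
  then show ?thesis
    unfolding hom_frac_def hom_count_def inj_ratio_def by simp
qed (simp add: hom_frac_def inj_ratio_def)

lemma hom_frac_bounds: "1 \<le> n \<Longrightarrow> 0 \<le> hom_frac n \<omega> \<and> hom_frac n \<omega> \<le> 1"
  using hom_count_bounds[of n \<omega>] card_inj_maps_le[of m n]
  by (auto simp: hom_frac_def divide_le_eq_1 simp flip: of_nat_power of_nat_le_iff
      intro: order_trans[of _ "real (card (inj_maps m n))"])

lemma integrable_hom_frac: "integrable M (hom_frac n)"
  unfolding hom_frac_def by (intro integrable_divide integrable_hom_count)

lemma integrable_hom_frac_squared: "1 \<le> n \<Longrightarrow> integrable M (\<lambda>\<omega>. (hom_frac n \<omega>)\<^sup>2)"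
  using integrable_hom_frac[of n] hom_frac_bounds[of n]
  by (intro integrable_const_bound[where B = 1] AE_I2) (auto simp: abs_square_le_1)

lemma expectation_hom_frac: "(\<integral>\<omega>. hom_frac n \<omega> \<partial>M) = inj_ratio n * dens"
  unfolding hom_frac_def inj_ratio_def using expectation_hom_count by simp

lemma integrable_join_stat: "integrable M (join_stat n)"
  unfolding join_stat_def by (intro integrable_divide integrable_glued_count)

lemma expectation_join_stat_approx:
  assumes "1 \<le> n"
  shows "\<bar>(\<integral>\<omega>. join_stat n \<omega> \<partial>M) - join_moment_sum\<bar> \<le> 3 * real m ^ 4 / real n"
proof -
  define N where "N = real n ^ (m - 1) * real n ^ (m - 1)"
  define D where "D = real n ^ m * real n ^ (m - 1)"
  have N_pos: "N > 0" and DN: "D = N * real n"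
    unfolding N_def D_def using assms pattern_nonempty by (auto simp: power_Suc2[symmetric] simp del: power_Suc2)
  have "(\<integral>\<omega>. join_stat n \<omega> \<partial>M) - join_moment_sum = ((\<integral>\<omega>. glued_count n \<omega> \<partial>M) - D * join_moment_sum) / D"
    unfolding join_stat_def D_def using N_pos DN assms by (simp add: diff_divide_distrib)
  then have "\<bar>(\<integral>\<omega>. join_stat n \<omega> \<partial>M) - join_moment_sum\<bar> = \<bar>(\<integral>\<omega>. glued_count n \<omega> \<partial>M) - D * join_moment_sum\<bar> / D"
    using N_pos DN assms by simp
  also have "\<dots> \<le> 3 * real m ^ 4 * N / D"
    using expectation_glued_count_approx[of n] N_pos DN assms unfolding D_def N_def
    by (intro divide_right_mono) (simp_all add: mult.assoc)
  also have "\<dots> = 3 * real m ^ 4 / real n"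
    unfolding DN using N_pos by simp
  finally show ?thesis .
qed

lemma join_defect_nonneg: "\<omega> \<in> space M \<Longrightarrow> 1 \<le> n \<Longrightarrow> 0 \<le> join_defect n \<omega>"
  using sum_t_hat_join_ge[of \<omega> n] sum_t_hat_join_eq[of \<omega> n]
  unfolding join_defect_def hom_frac_def join_stat_def by simp

lemma integrable_join_defect: "1 \<le> n \<Longrightarrow> integrable M (join_defect n)"
  unfolding join_defect_def using integrable_join_stat integrable_hom_frac_squared by simp

lemma card_aut_sigma2_eq:
  assumes "\<omega> \<in> space M"
  shows "real (card (aut m E)) ^ 2 * sigma2 m E n (layer_adj n A k \<omega>)
           = join_stat n \<omega> - real m ^ 2 * (hom_count n \<omega> / real (card (inj_maps m n)))\<^sup>2"
  using card_aut_ge_1[of m E]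
  unfolding sigma2_def sum_t_hat_join_eq[OF assms] t_hat_eq[OF assms] join_stat_def by simp

lemma one_minus_inj_ratio_squared_bounds:
  assumes "1 \<le> n"
  shows "0 \<le> 1 - (inj_ratio n)\<^sup>2" "1 - (inj_ratio n)\<^sup>2 \<le> 2 * real m ^ 2 / real n"
proof -
  have r: "1 - real (m * m) / real n \<le> inj_ratio n" "inj_ratio n \<le> 1" "0 \<le> inj_ratio n"
    using inj_ratio_bounds[OF assms] by (auto simp: inj_ratio_def)
  then show "0 \<le> 1 - (inj_ratio n)\<^sup>2"
    by (simp add: power_le_one)
  have "0 \<le> (1 - inj_ratio n)\<^sup>2"
    by simp
  then have "1 - (inj_ratio n)\<^sup>2 \<le> 2 * (1 - inj_ratio n)"
    by (simp add: power2_eq_square algebra_simps)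
  also have "\<dots> \<le> 2 * real m ^ 2 / real n"
    using r(1) by (simp add: power2_eq_square)
  finally show "1 - (inj_ratio n)\<^sup>2 \<le> 2 * real m ^ 2 / real n" .
qed

lemma card_aut_sigma2_approx:
  assumes "\<omega> \<in> space M" "1 \<le> n"
  shows "\<bar>real (card (aut m E)) ^ 2 * sigma2 m E n (layer_adj n A k \<omega>)
            - join_defect n \<omega>\<bar> \<le> 2 * real m ^ 4 / real n"
proof -
  define h where "h = hom_count n \<omega> / real (card (inj_maps m n))"
  have "0 \<le> h" "h \<le> 1"
    unfolding h_def using hom_count_bounds[of n \<omega>] by (auto simp: divide_le_eq_1)
  then have h: "0 \<le> h\<^sup>2" "h\<^sup>2 \<le> 1"
    by (simp_all add: power_le_one)
  note r = one_minus_inj_ratio_squared_bounds[OF assms(2)]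
  have "real (card (aut m E)) ^ 2 * sigma2 m E n (layer_adj n A k \<omega>)
      - join_defect n \<omega> = - (real m ^ 2 * (h\<^sup>2 * (1 - (inj_ratio n)\<^sup>2)))"
    unfolding card_aut_sigma2_eq[OF assms(1)] join_defect_def hom_frac_eq h_def[symmetric]
    by (simp add: power_mult_distrib algebra_simps)
  moreover have "0 \<le> real m ^ 2 * (h\<^sup>2 * (1 - (inj_ratio n)\<^sup>2))"
    using r h by simp
  ultimately have "\<bar>real (card (aut m E)) ^ 2 * sigma2 m E n (layer_adj n A k \<omega>)
      - join_defect n \<omega>\<bar> = real m ^ 2 * (h\<^sup>2 * (1 - (inj_ratio n)\<^sup>2))"
    by simp
  also have "\<dots> \<le> real m ^ 2 * (1 * (2 * real m ^ 2 / real n))"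
    using h r by (intro mult_left_mono mult_mono) auto
  also have "\<dots> = 2 * real m ^ 4 / real n"
    by (simp add: power4_eq_xxxx power2_eq_square)
  finally show ?thesis .
qed

lemma hom_frac_deviation_le:
  assumes "1 \<le> n" "\<delta> > 0"
  shows "prob {\<omega> \<in> space M. \<delta> \<le> \<bar>hom_frac n \<omega> - inj_ratio n * dens\<bar>} \<le> real m ^ 2 / (real n * \<delta>\<^sup>2)"
proof -
  have pos: "real n ^ m > 0"
    using assms(1) by simp
  have set_eq: "{\<omega> \<in> space M. \<delta> \<le> \<bar>hom_frac n \<omega> - inj_ratio n * dens\<bar>}
      = {\<omega> \<in> space M. \<delta> \<le> \<bar>(\<Sum>f\<in>inj_maps m n. indicator (edge_event n (copy_edges f)) \<omega>) / real n ^ m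
                          - (\<Sum>f\<in>inj_maps m n. edge_prob n (copy_edges f)) / real n ^ m\<bar>}"
    by (simp add: hom_frac_def hom_count_def inj_ratio_def edge_prob_copy)
  have "prob {\<omega> \<in> space M. \<delta> \<le> \<bar>hom_frac n \<omega> - inj_ratio n * dens\<bar>}
      \<le> real (card {p \<in> inj_maps m n \<times> inj_maps m n.
           Field (copy_edges (fst p)) \<inter> Field (copy_edges (snd p)) \<noteq> {}}) / (real n ^ m * \<delta>)\<^sup>2"
    unfolding set_eq
    by (rule edge_count_deviation_le[where P = "\<lambda>f. copy_edges f",
          OF finite_inj_maps copy_edges_subset_vertex_pairs assms(2) pos])
  also have "\<dots> \<le> real (n * ((m * n ^ (m - 1)) * (m * n ^ (m - 1)))) / (real n ^ m * \<delta>)\<^sup>2"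
    by (intro divide_right_mono) (simp_all only: of_nat_le_iff card_overlapping_copies_le zero_le_power2)
  also have "\<dots> = real m ^ 2 / (real n * \<delta>\<^sup>2)"
  proof -
    obtain j where "m = Suc j"
      using pattern_nonempty by (cases m) auto
    then show ?thesis
      using assms by (simp add: field_simps power2_eq_square)
  qed
  finally show ?thesis .
qed

lemma join_stat_deviation_le:
  assumes "1 \<le> n" "\<delta> > 0"
  shows "prob {\<omega> \<in> space M. \<delta> \<le> \<bar>join_stat n \<omega> - (\<integral>\<omega>. join_stat n \<omega> \<partial>M)\<bar>} \<le> 4 * real m ^ 6 / (real n * \<delta>\<^sup>2)"
proof -
  define N where "N = real n ^ (m - 1) * real n ^ (m - 1)"
  define D where "D = real n ^ m * real n ^ (m - 1)"
  have N_pos: "N > 0" and DN: "D = N * real n"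
    unfolding N_def D_def using assms pattern_nonempty by (auto simp: power_Suc2[symmetric] simp del: power_Suc2)
  have set_eq: "{\<omega> \<in> space M. \<delta> \<le> \<bar>join_stat n \<omega> - (\<integral>\<omega>. join_stat n \<omega> \<partial>M)\<bar>}
      = {\<omega> \<in> space M. \<delta> \<le> \<bar>(\<Sum>\<alpha>\<in>glued_index n. indicator (edge_event n (glued_edges \<alpha>)) \<omega>) / D
                          - (\<Sum>\<alpha>\<in>glued_index n. edge_prob n (glued_edges \<alpha>)) / D\<bar>}"
    unfolding join_stat_def glued_count_def D_def
    by (simp add: integral_divide_zero expectation_glued_count[unfolded glued_count_def])
  have "prob {\<omega> \<in> space M. \<delta> \<le> \<bar>join_stat n \<omega> - (\<integral>\<omega>. join_stat n \<omega> \<partial>M)\<bar>}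
      \<le> real (card {p \<in> glued_index n \<times> glued_index n.
           Field (glued_edges (fst p)) \<inter> Field (glued_edges (snd p)) \<noteq> {}}) / (D * \<delta>)\<^sup>2"
    unfolding set_eq using N_pos DN assms
    by (intro edge_count_deviation_le[OF finite_glued_index glued_edges_subset_vertex_pairs]) auto
  also have "\<dots> \<le> real n * ((2 * real m ^ 3 * N) * (2 * real m ^ 3 * N)) / (D * \<delta>)\<^sup>2"
  proof (rule divide_right_mono)
    show "real (card {p \<in> glued_index n \<times> glued_index n.
        Field (glued_edges (fst p)) \<inter> Field (glued_edges (snd p)) \<noteq> {}})
        \<le> real n * ((2 * real m ^ 3 * N) * (2 * real m ^ 3 * N))"
    proof -
      have "real (card {p \<in> glued_index n \<times> glued_index n.
          Field (glued_edges (fst p)) \<inter> Field (glued_edges (snd p)) \<noteq> {}})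
          \<le> real (n * ((m * m * (2 * (m * n ^ (m - 1) * n ^ (m - 1)))) * (m * m * (2 * (m * n ^ (m - 1) * n ^ (m - 1))))))"
        by (simp only: of_nat_le_iff card_overlapping_glued_le)
      also have "\<dots> = real n * ((2 * real m ^ 3 * N) * (2 * real m ^ 3 * N))"
        unfolding N_def by (simp add: power3_eq_cube algebra_simps)
      finally show ?thesis .
    qed
  qed simp
  also have "\<dots> = 4 * real m ^ 6 / (real n * \<delta>\<^sup>2)"
    unfolding DN using N_pos assms by (simp add: field_simps power2_eq_square)
  finally show ?thesis .
qed

lemma expectation_join_defect_le:
  assumes "F_regular m E (W k)" "1 \<le> n"
  shows "(\<integral>\<omega>. join_defect n \<omega> \<partial>M) \<le> 5 * real m ^ 4 / real n"
proof -
  note X_int = integrable_hom_frac[of n] integrable_hom_frac_squared[OF assms(2)]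
  have "0 \<le> (\<integral>\<omega>. (hom_frac n \<omega>)\<^sup>2 \<partial>M) - (\<integral>\<omega>. hom_frac n \<omega> \<partial>M)\<^sup>2"
    using variance_positive[of "hom_frac n"] variance_eq[OF X_int] by linarith
  then have "(inj_ratio n * dens)\<^sup>2 \<le> (\<integral>\<omega>. (hom_frac n \<omega>)\<^sup>2 \<partial>M)"
    by (simp add: expectation_hom_frac)
  then have "real m ^ 2 * (inj_ratio n * dens)\<^sup>2 \<le> real m ^ 2 * (\<integral>\<omega>. (hom_frac n \<omega>)\<^sup>2 \<partial>M)"
    by (rule mult_left_mono) simp
  moreover have "(\<integral>\<omega>. join_stat n \<omega> \<partial>M) \<le> (real m * dens)\<^sup>2 + 3 * real m ^ 4 / real n"
    using expectation_join_stat_approx[OF assms(2)] assms(1)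
    unfolding F_regular_iff_regularity_gap regularity_gap_def by linarith
  moreover have "(\<integral>\<omega>. join_defect n \<omega> \<partial>M)
      = (\<integral>\<omega>. join_stat n \<omega> \<partial>M) - real m ^ 2 * (\<integral>\<omega>. (hom_frac n \<omega>)\<^sup>2 \<partial>M)"
    unfolding join_defect_def using integrable_join_stat X_int by simp
  ultimately have "(\<integral>\<omega>. join_defect n \<omega> \<partial>M)
      \<le> (real m * dens)\<^sup>2 + 3 * real m ^ 4 / real n - real m ^ 2 * (inj_ratio n * dens)\<^sup>2"
    by linarith
  also have "\<dots> = real m ^ 2 * (dens\<^sup>2 * (1 - (inj_ratio n)\<^sup>2)) + 3 * real m ^ 4 / real n"
    by (simp add: power_mult_distrib algebra_simps)
  also have "\<dots> \<le> real m ^ 2 * (1 * (2 * real m ^ 2 / real n)) + 3 * real m ^ 4 / real n"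
    using one_minus_inj_ratio_squared_bounds[OF assms(2)] hom_density_bounds
    by (intro add_right_mono mult_left_mono mult_mono) (auto simp: power_le_one)
  also have "\<dots> = 5 * real m ^ 4 / real n"
    by (simp add: power4_eq_xxxx power2_eq_square field_simps)
  finally show ?thesis .
qed

lemma join_defect_ge_if_scaled_sigma2_gt:
  assumes \<omega>: "\<omega> \<in> space M" and n: "1 \<le> n" and \<epsilon>: "\<epsilon> > 0"
    and large: "4 * real m ^ 4 / \<epsilon> \<le> sqrt (real n)"
    and gt: "\<epsilon> < \<bar>sqrt (real n) * sigma2 m E n (layer_adj n A k \<omega>)\<bar>"
  shows "\<epsilon> / (2 * sqrt (real n)) \<le> join_defect n \<omega>"
proof -
  define s where "s = sqrt (real n)"
  have s: "s > 0" "s * s = real n"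
    unfolding s_def using n by auto
  have "\<bar>sigma2 m E n (layer_adj n A k \<omega>)\<bar> \<le> \<bar>real (card (aut m E)) ^ 2 * sigma2 m E n (layer_adj n A k \<omega>)\<bar>"
    using card_aut_ge_1[of m E] by (simp add: abs_mult mult_le_cancel_right1 one_le_power)
  also have "\<dots> \<le> join_defect n \<omega> + 2 * real m ^ 4 / real n"
    using card_aut_sigma2_approx[OF \<omega> n] join_defect_nonneg[OF \<omega> n] by linarith
  finally have "s * \<bar>sigma2 m E n (layer_adj n A k \<omega>)\<bar> \<le> s * join_defect n \<omega> + s * (2 * real m ^ 4 / real n)"
    using s(1) by (metis distrib_left mult_left_mono less_imp_le)
  also have "s * (2 * real m ^ 4 / real n) = 2 * real m ^ 4 / s"
    using s by (simp add: field_simps flip: s(2))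
  also have "2 * real m ^ 4 / s \<le> \<epsilon> / 2"
    using large s \<epsilon> unfolding s_def[symmetric] by (simp add: field_simps)
  finally have "s * \<bar>sigma2 m E n (layer_adj n A k \<omega>)\<bar> \<le> s * join_defect n \<omega> + \<epsilon> / 2"
    by simp
  moreover have "\<epsilon> < s * \<bar>sigma2 m E n (layer_adj n A k \<omega>)\<bar>"
    using gt unfolding s_def by (simp add: abs_mult)
  ultimately have "\<epsilon> / 2 < s * join_defect n \<omega>"
    by linarith
  then show ?thesis
    using s unfolding s_def[symmetric] by (simp add: field_simps)
qed

lemma prob_scaled_sigma2_gt_le:
  assumes reg: "F_regular m E (W k)" and \<epsilon>: "\<epsilon> > 0" and n: "1 \<le> n"
    and large: "4 * real m ^ 4 / \<epsilon> \<le> sqrt (real n)"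
  shows "measure M {\<omega> \<in> space M. \<bar>sqrt (real n) * sigma2 m E n (layer_adj n A k \<omega>)\<bar> > \<epsilon>}
           \<le> 10 * real m ^ 4 / \<epsilon> / sqrt (real n)"
proof -
  define s where "s = sqrt (real n)"
  have s: "s > 0" "s * s = real n"
    unfolding s_def using n by auto
  have [measurable]: "join_defect n \<in> borel_measurable M"
    using integrable_join_defect[OF n] by auto
  have "{\<omega> \<in> space M. \<bar>sqrt (real n) * sigma2 m E n (layer_adj n A k \<omega>)\<bar> > \<epsilon>}
      \<subseteq> {\<omega> \<in> space M. \<epsilon> / (2 * s) \<le> join_defect n \<omega>}"
    using join_defect_ge_if_scaled_sigma2_gt[OF _ n \<epsilon> large] unfolding s_def by auto
  moreover have "{\<omega> \<in> space M. \<epsilon> / (2 * s) \<le> join_defect n \<omega>} \<in> sets M"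
    by measurable
  ultimately have "measure M {\<omega> \<in> space M. \<bar>sqrt (real n) * sigma2 m E n (layer_adj n A k \<omega>)\<bar> > \<epsilon>}
      \<le> measure M {\<omega> \<in> space M. \<epsilon> / (2 * s) \<le> join_defect n \<omega>}"
    by (rule finite_measure_mono)
  also have "\<dots> \<le> (\<integral>\<omega>. join_defect n \<omega> \<partial>M) / (\<epsilon> / (2 * s))"
    using s \<epsilon> join_defect_nonneg[OF _ n]
    by (intro integral_Markov_inequality_measure[OF integrable_join_defect[OF n]]) auto
  also have "\<dots> \<le> (5 * real m ^ 4 / real n) / (\<epsilon> / (2 * s))"
    using expectation_join_defect_le[OF reg n] s \<epsilon> by (intro divide_right_mono) auto
  also have "\<dots> = 10 * real m ^ 4 / \<epsilon> / s"
    using s \<epsilon> by (simp add: field_simps flip: s(2))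
  finally show ?thesis
    unfolding s_def .
qed

lemma regular_case:
  assumes "F_regular m E (W k)" "\<epsilon> > 0"
  shows "(\<lambda>n. measure M {\<omega> \<in> space M. \<bar>sqrt (real n) * sigma2 m E n (layer_adj n A k \<omega>)\<bar> > \<epsilon>}) \<longlonglongrightarrow> 0"
proof (rule tendsto_sandwich[OF _ _ tendsto_const])
  show "\<forall>\<^sub>F n in sequentially. 0 \<le> measure M {\<omega> \<in> space M. \<bar>sqrt (real n) * sigma2 m E n (layer_adj n A k \<omega>)\<bar> > \<epsilon>}"
    by simp
  have "\<forall>\<^sub>F n in sequentially. 1 \<le> n \<and> 4 * real m ^ 4 / \<epsilon> \<le> sqrt (real n)"
    using eventually_ge_at_top sqrt_real_at_top[unfolded filterlim_at_top, rule_format]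
    by (rule eventually_conj)
  then show "\<forall>\<^sub>F n in sequentially. measure M {\<omega> \<in> space M. \<bar>sqrt (real n) * sigma2 m E n (layer_adj n A k \<omega>)\<bar> > \<epsilon>}
      \<le> 10 * real m ^ 4 / \<epsilon> / sqrt (real n)"
    by eventually_elim (use prob_scaled_sigma2_gt_le[OF assms] in auto)
  show "(\<lambda>n. 10 * real m ^ 4 / \<epsilon> / sqrt (real n)) \<longlonglongrightarrow> 0"
    by (intro tendsto_divide_0[OF tendsto_const] filterlim_at_top_imp_at_infinity sqrt_real_at_top)
qed

lemma card_aut_sigma2_ge:
  assumes \<omega>: "\<omega> \<in> space M" and n: "1 \<le> n" and \<delta>: "\<delta> \<le> 1"
    and Y: "\<bar>join_stat n \<omega> - (\<integral>\<omega>. join_stat n \<omega> \<partial>M)\<bar> < \<delta>"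
    and X: "\<bar>hom_frac n \<omega> - inj_ratio n * dens\<bar> < \<delta>"
  shows "regularity_gap - 5 * real m ^ 4 / real n - \<delta> * (1 + 3 * real m ^ 2)
           \<le> real (card (aut m E)) ^ 2 * sigma2 m E n (layer_adj n A k \<omega>)"
proof -
  have d: "0 \<le> dens" "dens \<le> 1"
    using hom_density_bounds by auto
  have "inj_ratio n * dens \<le> dens"
    using inj_ratio_bounds[OF n] d by (intro mult_left_le_one_le) (simp_all add: inj_ratio_def)
  then have "hom_frac n \<omega> \<le> dens + \<delta>"
    using X by linarith
  then have "(hom_frac n \<omega>)\<^sup>2 \<le> (dens + \<delta>)\<^sup>2"
    using hom_frac_bounds[OF n] by (intro power_mono) auto
  also have "\<dots> \<le> dens\<^sup>2 + 3 * \<delta>"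
  proof -
    have "0 \<le> \<delta>"
      using X by linarith
    then have "\<delta> * (\<delta> + 2 * dens) \<le> \<delta> * 3"
      using d \<delta> by (intro mult_left_mono) auto
    then show ?thesis
      by (simp add: power2_eq_square algebra_simps)
  qed
  finally have "real m ^ 2 * (hom_frac n \<omega>)\<^sup>2 \<le> real m ^ 2 * (dens\<^sup>2 + 3 * \<delta>)"
    by (rule mult_left_mono) simp
  moreover have "join_moment_sum - 3 * real m ^ 4 / real n - \<delta> \<le> join_stat n \<omega>"
    using Y expectation_join_stat_approx[OF n] by linarith
  moreover have "join_stat n \<omega> - real m ^ 2 * (hom_frac n \<omega>)\<^sup>2 - 2 * real m ^ 4 / real n
      \<le> real (card (aut m E)) ^ 2 * sigma2 m E n (layer_adj n A k \<omega>)"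
    using card_aut_sigma2_approx[OF \<omega> n] unfolding join_defect_def by linarith
  ultimately show ?thesis
    unfolding regularity_gap_def by (simp add: power_mult_distrib algebra_simps)
qed

lemma scaled_sigma2_gt_if_concentrated:
  assumes \<omega>: "\<omega> \<in> space M" and n: "1 \<le> n" and gap: "regularity_gap > 0"
    and \<delta>: "\<delta> \<le> 1" "\<delta> * (1 + 3 * real m ^ 2) \<le> regularity_gap / 4"
    and large: "20 * real m ^ 4 / regularity_gap \<le> real n"
      "2 * real (card (aut m E)) ^ 2 * \<bar>C\<bar> / regularity_gap < sqrt (real n)"
    and Y: "\<bar>join_stat n \<omega> - (\<integral>\<omega>. join_stat n \<omega> \<partial>M)\<bar> < \<delta>"
    and X: "\<bar>hom_frac n \<omega> - inj_ratio n * dens\<bar> < \<delta>"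
  shows "C < sqrt (real n) * sigma2 m E n (layer_adj n A k \<omega>)"
proof -
  define Au where "Au = real (card (aut m E)) ^ 2"
  have Au: "Au \<ge> 1"
    unfolding Au_def using card_aut_ge_1[of m E] by simp
  have "5 * real m ^ 4 / real n \<le> regularity_gap / 4"
    using large(1) gap n by (simp add: field_simps)
  then have "regularity_gap / 2 \<le> Au * sigma2 m E n (layer_adj n A k \<omega>)"
    using card_aut_sigma2_ge[OF \<omega> n \<delta>(1) Y X] \<delta>(2) unfolding Au_def by linarith
  then have "regularity_gap / (2 * Au) \<le> sigma2 m E n (layer_adj n A k \<omega>)"
    using Au by (simp add: field_simps)
  then have "sqrt (real n) * (regularity_gap / (2 * Au)) \<le> sqrt (real n) * sigma2 m E n (layer_adj n A k \<omega>)"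
    by (rule mult_left_mono) simp
  moreover have "2 * Au * \<bar>C\<bar> < sqrt (real n) * regularity_gap"
    using large(2) gap unfolding Au_def[symmetric] by (simp add: divide_less_eq)
  then have "\<bar>C\<bar> < sqrt (real n) * (regularity_gap / (2 * Au))"
    using Au by (simp add: field_simps)
  ultimately show ?thesis
    by linarith
qed

lemma prob_scaled_sigma2_le_le:
  assumes n: "1 \<le> n" and gap: "regularity_gap > 0"
    and \<delta>: "0 < \<delta>" "\<delta> \<le> 1" "\<delta> * (1 + 3 * real m ^ 2) \<le> regularity_gap / 4"
    and large: "20 * real m ^ 4 / regularity_gap \<le> real n"
      "2 * real (card (aut m E)) ^ 2 * \<bar>C\<bar> / regularity_gap < sqrt (real n)"
  shows "measure M {\<omega> \<in> space M. sqrt (real n) * sigma2 m E n (layer_adj n A k \<omega>) \<le> C}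
           \<le> (4 * real m ^ 6 + real m ^ 2) / (real n * \<delta>\<^sup>2)"
proof -
  define S1 where "S1 = {\<omega> \<in> space M. \<delta> \<le> \<bar>join_stat n \<omega> - (\<integral>\<omega>. join_stat n \<omega> \<partial>M)\<bar>}"
  define S2 where "S2 = {\<omega> \<in> space M. \<delta> \<le> \<bar>hom_frac n \<omega> - inj_ratio n * dens\<bar>}"
  have [measurable]: "join_stat n \<in> borel_measurable M" "hom_frac n \<in> borel_measurable M"
    using integrable_join_stat integrable_hom_frac by auto
  have sets: "S1 \<in> sets M" "S2 \<in> sets M"
    unfolding S1_def S2_def by measurable
  have "{\<omega> \<in> space M. sqrt (real n) * sigma2 m E n (layer_adj n A k \<omega>) \<le> C} \<subseteq> S1 \<union> S2"
  proof
    fix \<omega> assume "\<omega> \<in> {\<omega> \<in> space M. sqrt (real n) * sigma2 m E n (layer_adj n A k \<omega>) \<le> C}"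
    then have \<omega>: "\<omega> \<in> space M" and le: "sqrt (real n) * sigma2 m E n (layer_adj n A k \<omega>) \<le> C"
      by auto
    show "\<omega> \<in> S1 \<union> S2"
    proof (rule ccontr)
      assume "\<omega> \<notin> S1 \<union> S2"
      then have "\<bar>join_stat n \<omega> - (\<integral>\<omega>. join_stat n \<omega> \<partial>M)\<bar> < \<delta>" "\<bar>hom_frac n \<omega> - inj_ratio n * dens\<bar> < \<delta>"
        using \<omega> unfolding S1_def S2_def by auto
      from scaled_sigma2_gt_if_concentrated[OF \<omega> n gap \<delta>(2,3) large this] le show False
        by linarith
    qed
  qed
  then have "measure M {\<omega> \<in> space M. sqrt (real n) * sigma2 m E n (layer_adj n A k \<omega>) \<le> C} \<le> measure M (S1 \<union> S2)"
    using sets by (intro finite_measure_mono) auto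
  also have "\<dots> \<le> measure M S1 + measure M S2"
    by (rule measure_Un_le[OF sets])
  also have "\<dots> \<le> 4 * real m ^ 6 / (real n * \<delta>\<^sup>2) + real m ^ 2 / (real n * \<delta>\<^sup>2)"
    unfolding S1_def S2_def
    by (intro add_mono join_stat_deviation_le hom_frac_deviation_le n \<delta>(1))
  also have "\<dots> = (4 * real m ^ 6 + real m ^ 2) / (real n * \<delta>\<^sup>2)"
    by (simp add: add_divide_distrib)
  finally show ?thesis .
qed

lemma irregular_case:
  assumes "\<not> F_regular m E (W k)"
  shows "(\<lambda>n. measure M {\<omega> \<in> space M. sqrt (real n) * sigma2 m E n (layer_adj n A k \<omega>) \<le> C}) \<longlonglongrightarrow> 0"
proof -
  have gap: "regularity_gap > 0"
    using assms regularity_gap_nonneg F_regular_iff_regularity_gap by fastforce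
  define \<delta> where "\<delta> = min 1 (regularity_gap / (4 * (1 + 3 * real m ^ 2)))"
  have \<delta>: "0 < \<delta>" "\<delta> \<le> 1" "\<delta> * (1 + 3 * real m ^ 2) \<le> regularity_gap / 4"
    unfolding \<delta>_def using gap by (auto simp: field_simps min_def add_pos_nonneg)
  show ?thesis
  proof (rule tendsto_sandwich[OF _ _ tendsto_const])
    show "\<forall>\<^sub>F n in sequentially. 0 \<le> measure M {\<omega> \<in> space M. sqrt (real n) * sigma2 m E n (layer_adj n A k \<omega>) \<le> C}"
      by simp
    have "\<forall>\<^sub>F n in sequentially. 1 \<le> n \<and> 20 * real m ^ 4 / regularity_gap \<le> real n
        \<and> 2 * real (card (aut m E)) ^ 2 * \<bar>C\<bar> / regularity_gap + 1 \<le> sqrt (real n)"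
      using filterlim_real_sequentially[unfolded filterlim_at_top, rule_format]
        sqrt_real_at_top[unfolded filterlim_at_top, rule_format]
      by (intro eventually_conj eventually_ge_at_top)
    then show "\<forall>\<^sub>F n in sequentially. measure M {\<omega> \<in> space M. sqrt (real n) * sigma2 m E n (layer_adj n A k \<omega>) \<le> C}
        \<le> (4 * real m ^ 6 + real m ^ 2) / \<delta>\<^sup>2 / real n"
      by eventually_elim (use prob_scaled_sigma2_le_le[OF _ gap \<delta>] in \<open>auto simp: field_simps\<close>)
    show "(\<lambda>n. (4 * real m ^ 6 + real m ^ 2) / \<delta>\<^sup>2 / real n) \<longlonglongrightarrow> 0"
      by (intro tendsto_divide_0[OF tendsto_const] filterlim_at_top_imp_at_infinity filterlim_real_sequentially)
  qed
qed

end

theorem proposition6: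
  fixes d m :: nat and E :: "(nat \<times> nat) set"
    and W :: "nat set \<Rightarrow> real \<Rightarrow> real \<Rightarrow> real"
    and M :: "'a measure" and \<xi> :: "nat \<Rightarrow> nat \<Rightarrow> 'a \<Rightarrow> real"
    and A :: "nat \<Rightarrow> nat \<Rightarrow> nat \<Rightarrow> nat \<Rightarrow> 'a \<Rightarrow> bool"
    and k :: "nat set"
  assumes "d \<ge> 1" and "m \<ge> 1" and "simple_graph m E"
    and "multigraphon d W"
    and "multiplex_model M d W \<xi> A"
    and "AE \<omega> in M. (\<lambda>n. joint_cut_dist n d (\<lambda>j. layer_adj n A {j} \<omega>) W) \<longlonglongrightarrow> 0"
    and "k \<in> Lambda d"
  shows "(F_regular m E (W k) \<longrightarrow>
           (\<forall>\<epsilon>>0. (\<lambda>n. measure M {\<omega> \<in> space M.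
              \<bar>sqrt (real n) * sigma2 m E n (layer_adj n A k \<omega>)\<bar> > \<epsilon>}) \<longlonglongrightarrow> 0)) \<and>
         (\<not> F_regular m E (W k) \<longrightarrow>
           (\<forall>C. (\<lambda>n. measure M {\<omega> \<in> space M.
              sqrt (real n) * sigma2 m E n (layer_adj n A k \<omega>) \<le> C}) \<longlonglongrightarrow> 0))"
proof -
  interpret pattern_multiplex M d W \<xi> A k m E
  proof unfold_locales
    show "graphon (W k)"
      using assms(4,7) by (simp add: multigraphon_def)
  qed (use assms in auto)
  show ?thesis
    using regular_case irregular_case by blast
qed

end
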